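(* Let $X$ be a complex Banach space such that $A_u(B_X)=A(B_X)$. If $Y$ is a Banach space isomorphic to $X$ (i.e. there is a bounded linear bijection $T:Y\to X$ with bounded inverse), then $A_u(B_Y)=A(B_Y)$.
   Context: For a complex Banach space $Z$ with open unit ball $B_Z$: $A_u(B_Z)$ is the uniform algebra (supremum norm on $B_Z$) of bounded holomorphic functions on $B_Z$ that are uniformly continuous on $B_Z$; a finite type polynomial on $Z$ is a polynomial in finitely many elements of $Z^*$ (i.e. an element of the algebra generated by $Z^*$ and the constants); $A(B_Z)$ is the set of functions on $B_Z$ that are uniform limits on $B_Z$ of finite type polynomials. Always $A(B_Z)\subset A_u(B_Z)$. *)

theory Defs
  imports "HOL-Analysis.Analysis"
begin

class complex_vector_space = real_vector +
  fixes scaleC :: "complex \<Rightarrow> 'a \<Rightarrow> 'a"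
  assumes scaleC_add_right: "scaleC a (x + y) = scaleC a x + scaleC a y"
    and scaleC_add_left: "scaleC (a + b) x = scaleC a x + scaleC b x"
    and scaleC_scaleC: "scaleC a (scaleC b x) = scaleC (a * b) x"
    and scaleC_one: "scaleC 1 x = x"
    and scaleR_scaleC: "scaleR r x = scaleC (complex_of_real r) x"

class complex_normed_vector = complex_vector_space + real_normed_vector +
  assumes norm_scaleC: "norm (scaleC a x) = cmod a * norm x"

class complex_banach = complex_normed_vector + banach

definition clinear :: "('a::complex_vector_space \<Rightarrow> 'b::complex_vector_space) \<Rightarrow> bool" where
  "clinear T \<longleftrightarrow> (\<forall>x y. T (x + y) = T x + T y) \<and> (\<forall>c x. T (scaleC c x) = scaleC c (T x))"

definition cdual :: "('a::complex_normed_vector \<Rightarrow> complex) set" where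
  "cdual = {\<phi>. bounded_linear \<phi> \<and> (\<forall>c x. \<phi> (scaleC c x) = c * \<phi> x)}"

definition holomorphic_on_space :: "('a::complex_normed_vector \<Rightarrow> complex) \<Rightarrow> 'a set \<Rightarrow> bool" where
  "holomorphic_on_space f U \<longleftrightarrow>
     (\<forall>x\<in>U. \<exists>D. (f has_derivative D) (at x) \<and> (\<forall>c v. D (scaleC c v) = c * D v))"

text \<open>A_u(B_Z), membership depends only on the values on the open unit ball.\<close>
definition in_Au :: "('a::complex_normed_vector \<Rightarrow> complex) \<Rightarrow> bool" where
  "in_Au f \<longleftrightarrow> bounded (f ` ball 0 1) \<and> holomorphic_on_space f (ball 0 1)
                 \<and> uniformly_continuous_on (ball 0 1) f"

inductive_set ftpoly :: "('a::complex_normed_vector \<Rightarrow> complex) set" where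
  const: "(\<lambda>x. c) \<in> ftpoly"
| dual: "\<phi> \<in> cdual \<Longrightarrow> \<phi> \<in> ftpoly"
| add: "p \<in> ftpoly \<Longrightarrow> q \<in> ftpoly \<Longrightarrow> (\<lambda>x. p x + q x) \<in> ftpoly"
| mult: "p \<in> ftpoly \<Longrightarrow> q \<in> ftpoly \<Longrightarrow> (\<lambda>x. p x * q x) \<in> ftpoly"

definition in_A :: "('a::complex_normed_vector \<Rightarrow> complex) \<Rightarrow> bool" where
  "in_A f \<longleftrightarrow> (\<forall>e>0. \<exists>p\<in>ftpoly. \<forall>x\<in>ball 0 1. cmod (f x - p x) < e)"

end

theory Submission
  imports Defs "HOL-Computational_Algebra.Polynomial"
begin

text \<open>
  The inclusion \<open>A(B_Y) \<subseteq> A_u(B_Y)\<close> is elementary except for holomorphy, which we transfer from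
  \<open>X\<close>: around each point of \<open>B_Y\<close> the function factors through an affine chart of \<open>B_X\<close>.

  For the converse, let \<open>g \<in> A_u(B_Y)\<close>.  If \<open>X^* = 0\<close>, all of \<open>A(B_X)\<close> is constant, and the charts
  show that \<open>g\<close> is constant.  Otherwise a nonzero functional on \<open>X\<close> shows that every complex slice
  \<open>u \<mapsto> g(u z)\<close> is a uniform limit of polynomials on the closed disc.  Its Taylor coefficients are
  obtained, with explicit error bounds, as limits of discrete Fourier coefficients on roots of unity.
  This yields the homogeneous Taylor terms \<open>P_n\<close> of \<open>g\<close>; each pull-back \<open>P_n \<circ> T^{-1}\<close> is a uniform
  limit of functions in \<open>A_u(B_X) = A(B_X)\<close>, so it is in \<open>A(B_X)\<close>, and by homogeneity \<open>P_n \<in> A(B_Y)\<close>.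
  Finally \<open>g\<close> is uniformly approximated by its dilations \<open>g(r \<cdot>)\<close>, hence by truncated Taylor
  series \<open>\<Sum>_{n<N} r^n P_n\<close>, so \<open>g \<in> A(B_Y)\<close>.
\<close>

lemma scaleC_zero_right [simp]: "scaleC a 0 = (0::'a::complex_vector_space)"
proof -
  have "scaleC a 0 = scaleC a 0 + scaleC a (0::'a)" using scaleC_add_right[of a 0 0] by simp
  then show ?thesis by simp
qed

lemma scaleC_commute: "scaleC a (scaleC b x) = scaleC b (scaleC a (x::'a::complex_vector_space))"
  by (simp add: scaleC_scaleC mult.commute)

lemma scaleR_scaleC_commute:
  "scaleR r (scaleC c x) = scaleC c (scaleR r (x::'a::complex_vector_space))"
  by (simp add: scaleR_scaleC scaleC_scaleC mult.commute)

lemma bounded_linear_scaleC: "bounded_linear (scaleC c :: 'a::complex_normed_vector \<Rightarrow> 'a)"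
  by (rule bounded_linear_intro[where K = "cmod c"])
     (auto simp: scaleC_add_right scaleR_scaleC_commute norm_scaleC mult.commute)

definition bounded_clinear :: "('a::complex_normed_vector \<Rightarrow> 'b::complex_normed_vector) \<Rightarrow> bool" where
  "bounded_clinear L \<longleftrightarrow> bounded_linear L \<and> (\<forall>c x. L (scaleC c x) = scaleC c (L x))"

lemma bounded_clinear_scaleC: "bounded_clinear L \<Longrightarrow> bounded_clinear (\<lambda>x. scaleC c (L x))"
  unfolding bounded_clinear_def using bounded_linear_compose[OF bounded_linear_scaleC[of c], of L]
  by (auto simp: o_def scaleC_commute)

lemma bounded_clinear_scaleR: "bounded_clinear L \<Longrightarrow> bounded_clinear (\<lambda>x. scaleR r (L x))"
  unfolding bounded_clinear_def using bounded_linear_compose[OF bounded_linear_scaleR_right[of r], of L]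
  by (auto simp: o_def scaleR_scaleC_commute)

lemma bounded_clinear_zero: "bounded_clinear L \<Longrightarrow> L 0 = 0"
  unfolding bounded_clinear_def by (simp add: linear_0 bounded_linear.linear)

lemma bounded_clinear_rank_one:
  fixes \<psi> :: "'a::complex_normed_vector \<Rightarrow> complex" and z :: "'b::complex_normed_vector"
  assumes "\<psi> \<in> cdual"
  shows "bounded_clinear (\<lambda>x. scaleC (a * \<psi> x) z)"
proof -
  have bl: "bounded_linear \<psi>" and h: "\<And>c x. \<psi> (scaleC c x) = c * \<psi> x"
    using assms by (auto simp: cdual_def)
  obtain K where K: "\<And>x. cmod (\<psi> x) \<le> norm x * K" using bounded_linear.bounded[OF bl] by blast
  have "bounded_linear (\<lambda>x. scaleC (a * \<psi> x) z)"
  proof (rule bounded_linear_intro[where K = "cmod a * K * norm z"])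
    fix x y show "scaleC (a * \<psi> (x + y)) z = scaleC (a * \<psi> x) z + scaleC (a * \<psi> y) z"
      by (simp add: linear_add[OF bounded_linear.linear[OF bl]] distrib_left scaleC_add_left)
  next
    fix r x show "scaleC (a * \<psi> (scaleR r x)) z = scaleR r (scaleC (a * \<psi> x) z)"
      by (simp add: h scaleR_scaleC scaleC_scaleC mult.commute mult.left_commute)
  next
    fix x
    have "norm (scaleC (a * \<psi> x) z) = cmod a * cmod (\<psi> x) * norm z"
      by (simp add: norm_scaleC norm_mult)
    also have "\<dots> \<le> cmod a * (norm x * K) * norm z"
      using K[of x] by (intro mult_right_mono mult_left_mono) auto
    also have "\<dots> = norm x * (cmod a * K * norm z)" by (simp add: algebra_simps)
    finally show "norm (scaleC (a * \<psi> x) z) \<le> norm x * (cmod a * K * norm z)" .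
  qed
  moreover have "scaleC (a * \<psi> (scaleC c x)) z = scaleC c (scaleC (a * \<psi> x) z)" for c x
    by (simp add: h scaleC_scaleC mult.commute mult.left_commute)
  ultimately show ?thesis unfolding bounded_clinear_def by blast
qed

lemma bounded_clinear_inverse:
  assumes "bounded_clinear T" "bounded_linear T'" "\<And>y. T' (T y) = y" "\<And>x. T (T' x) = x"
  shows "bounded_clinear T'"
proof -
  have "T' (scaleC c x) = scaleC c (T' x)" for c x
  proof -
    have "T (scaleC c (T' x)) = scaleC c x" using assms(1,4) by (simp add: bounded_clinear_def)
    then show ?thesis using assms(3)[of "scaleC c (T' x)"] by simp
  qed
  then show ?thesis using assms(2) by (simp add: bounded_clinear_def)
qed

subsection \<open>Discrete Fourier coefficients on the roots of unity\<close>

definition unit_root :: "nat \<Rightarrow> complex" where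
  "unit_root N = exp (2 * of_real pi * \<i> / of_nat N)"

lemma unit_root_pow: "unit_root N ^ k = exp (2 * of_real pi * \<i> * of_nat k / of_nat N)"
  unfolding unit_root_def by (simp add: exp_of_nat_mult[symmetric] algebra_simps)

lemma unit_root_pow_eq_1: "N \<ge> 1 \<Longrightarrow> unit_root N ^ k = 1 \<longleftrightarrow> N dvd k"
  unfolding unit_root_pow by (rule complex_root_unity_eq_1)

lemma norm_unit_root_pow [simp]: "cmod (unit_root N ^ k) = 1"
  unfolding unit_root_pow by (simp add: norm_exp_eq_Re)

text \<open>The \<open>n\<close>-th discrete Fourier coefficient of \<open>f\<close> sampled at the \<open>N\<close>-th roots of unity:
  a Riemann sum for the Cauchy integral \<open>(1/2\<pi>i)\<oint> f(u) u^{-n-1} du\<close> over the unit circle.\<close>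

definition dft :: "nat \<Rightarrow> nat \<Rightarrow> (complex \<Rightarrow> complex) \<Rightarrow> complex" where
  "dft n N f = (\<Sum>j<N. unit_root N ^ (j * (N - n)) * f (unit_root N ^ j)) / of_nat N"

text \<open>The exponent \<open>N - n + m\<close> appearing in \<open>dft n N (u^m)\<close> is a multiple of \<open>N\<close> exactly when
  \<open>m \<equiv> n (mod N)\<close>.\<close>

lemma dvd_shift_iff_mod:
  fixes n N m :: nat
  assumes "n < N"
  shows "N dvd (N - n + m) \<longleftrightarrow> m mod N = n"
proof (cases "n \<le> m")
  case True
  then have "N - n + m = N + (m - n)" using assms by simp
  then have "N dvd (N - n + m) \<longleftrightarrow> N dvd (m - n)" by simp
  also have "\<dots> \<longleftrightarrow> m mod N = n mod N" using True by (simp add: mod_eq_dvd_iff_nat)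
  also have "n mod N = n" using assms by simp
  finally show ?thesis .
next
  case False
  then have "0 < N - n + m" "N - n + m < N" using assms by auto
  then have "\<not> N dvd (N - n + m)" by (auto dest: dvd_imp_le)
  moreover have "m mod N \<noteq> n" using False assms by simp
  ultimately show ?thesis by simp
qed

text \<open>Orthogonality of characters: sampling detects exactly the exponents \<open>\<equiv> n (mod N)\<close>.\<close>

lemma dft_monomial:
  assumes "n < N"
  shows "dft n N (\<lambda>u. u ^ m) = (if m mod N = n then 1 else 0)"
proof -
  define x where "x = unit_root N ^ (N - n + m)"
  have N1: "N \<ge> 1" using assms by simp
  have eq: "unit_root N ^ (j * (N - n)) * (unit_root N ^ j) ^ m = x ^ j" for j
  proof -
    have "unit_root N ^ (j * (N - n)) * (unit_root N ^ j) ^ m = unit_root N ^ (j * (N - n) + j * m)"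
      by (simp add: power_add power_mult)
    also have "j * (N - n) + j * m = (N - n + m) * j" by (simp add: add_mult_distrib2 mult.commute)
    also have "unit_root N ^ ((N - n + m) * j) = x ^ j" by (simp add: x_def power_mult)
    finally show ?thesis .
  qed
  have omN: "unit_root N ^ N = 1" using unit_root_pow_eq_1[OF N1, of N] by simp
  have xN: "x ^ N = 1"
  proof -
    have "x ^ N = (unit_root N ^ N) ^ (N - n + m)" unfolding x_def by (simp add: power_mult[symmetric] mult.commute)
    then show ?thesis using omN by simp
  qed
  have iff: "x = 1 \<longleftrightarrow> m mod N = n"
    unfolding x_def using unit_root_pow_eq_1[OF N1] dvd_shift_iff_mod[OF assms] by simp
  have "dft n N (\<lambda>u. u ^ m) = (\<Sum>j<N. x ^ j) / of_nat N"
    unfolding dft_def by (simp only: eq)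
  also have "\<dots> = (if m mod N = n then 1 else 0)"
  proof (cases "m mod N = n")
    case True
    then have "x = 1" using iff by simp
    then show ?thesis using True N1 by simp
  next
    case False
    then have "x \<noteq> 1" using iff by simp
    then have "(\<Sum>j<N. x ^ j) = 0" using xN by (simp add: sum_gp_strict)
    then show ?thesis using False by simp
  qed
  finally show ?thesis .
qed

lemma dft_sum: "dft n N (\<lambda>u. \<Sum>m\<in>S. F m u) = (\<Sum>m\<in>S. dft n N (F m))"
proof -
  have "(\<Sum>j<N. unit_root N ^ (j * (N - n)) * (\<Sum>m\<in>S. F m (unit_root N ^ j)))
      = (\<Sum>j<N. \<Sum>m\<in>S. unit_root N ^ (j * (N - n)) * F m (unit_root N ^ j))"
    by (simp only: sum_distrib_left)
  also have "\<dots> = (\<Sum>m\<in>S. \<Sum>j<N. unit_root N ^ (j * (N - n)) * F m (unit_root N ^ j))"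
    by (rule sum.swap)
  finally show ?thesis unfolding dft_def by (simp only: sum_divide_distrib)
qed

lemma dft_cmult: "dft n N (\<lambda>u. c * f u) = c * dft n N f"
proof -
  have "(\<Sum>j<N. unit_root N ^ (j * (N - n)) * (c * f (unit_root N ^ j)))
      = c * (\<Sum>j<N. unit_root N ^ (j * (N - n)) * f (unit_root N ^ j))"
    by (simp only: sum_distrib_left mult.left_commute)
  then show ?thesis unfolding dft_def by (simp only: times_divide_eq_right)
qed

lemma dft_diff: "dft n N (\<lambda>u. f u - g u) = dft n N f - dft n N g"
proof -
  have "(\<Sum>j<N. unit_root N ^ (j * (N - n)) * (f (unit_root N ^ j) - g (unit_root N ^ j)))
     = (\<Sum>j<N. unit_root N ^ (j * (N - n)) * f (unit_root N ^ j))
       - (\<Sum>j<N. unit_root N ^ (j * (N - n)) * g (unit_root N ^ j))"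
    by (simp only: right_diff_distrib sum_subtractf)
  then show ?thesis unfolding dft_def by (simp only: diff_divide_distrib)
qed

lemma dft_norm_le:
  assumes "N > 0" "\<And>u. cmod u = 1 \<Longrightarrow> cmod (f u) \<le> B"
  shows "cmod (dft n N f) \<le> B"
proof -
  have "cmod (\<Sum>j<N. unit_root N ^ (j * (N - n)) * f (unit_root N ^ j)) \<le> (\<Sum>j<N. B)"
  proof (rule sum_norm_le)
    fix j assume "j \<in> {..<N}"
    have "cmod (unit_root N ^ (j * (N - n)) * f (unit_root N ^ j)) = cmod (f (unit_root N ^ j))"
      by (simp only: norm_mult norm_unit_root_pow mult_1)
    also have "\<dots> \<le> B" by (rule assms(2)) (rule norm_unit_root_pow)
    finally show "cmod (unit_root N ^ (j * (N - n)) * f (unit_root N ^ j)) \<le> B" .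
  qed
  also have "\<dots> = of_nat N * B" by simp
  finally have S: "cmod (\<Sum>j<N. unit_root N ^ (j * (N - n)) * f (unit_root N ^ j)) \<le> of_nat N * B" .
  have "cmod (dft n N f) = cmod (\<Sum>j<N. unit_root N ^ (j * (N - n)) * f (unit_root N ^ j)) / of_nat N"
    unfolding dft_def by (simp add: norm_divide)
  also have "\<dots> \<le> (of_nat N * B) / of_nat N" using S assms(1) by (intro divide_right_mono) auto
  also have "\<dots> = B" using assms(1) by simp
  finally show ?thesis .
qed

lemma poly_as_sum:
  fixes q :: "complex poly"
  assumes "degree q < K"
  shows "poly q u = (\<Sum>m<K. coeff q m * u ^ m)"
proof -
  have "(\<Sum>m<K. coeff q m * u ^ m) = (\<Sum>m\<le>degree q. coeff q m * u ^ m)"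
    by (rule sum.mono_neutral_right) (use assms in \<open>auto simp: coeff_eq_0\<close>)
  then show ?thesis by (simp add: poly_altdef)
qed

lemma dft_poly_dilated:
  fixes q :: "complex poly"
  assumes "n < N" "degree q < K"
  shows "dft n N (\<lambda>u. poly q (t * u)) = (\<Sum>m<K. if m mod N = n then coeff q m * t ^ m else 0)"
proof -
  have "(\<lambda>u. poly q (t * u)) = (\<lambda>u. \<Sum>m<K. (coeff q m * t ^ m) * u ^ m)"
    using assms by (simp add: poly_as_sum power_mult_distrib mult.assoc)
  then have "dft n N (\<lambda>u. poly q (t * u)) = (\<Sum>m<K. dft n N (\<lambda>u. (coeff q m * t ^ m) * u ^ m))"
    by (simp add: dft_sum)
  also have "\<dots> = (\<Sum>m<K. coeff q m * t ^ m * (if m mod N = n then 1 else 0))"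
    by (simp only: dft_cmult dft_monomial[OF assms(1)])
  also have "\<dots> = (\<Sum>m<K. if m mod N = n then coeff q m * t ^ m else 0)"
    by (rule sum.cong) auto
  finally show ?thesis .
qed

lemma dft_poly:
  fixes q :: "complex poly"
  assumes "n < N" "degree q < N"
  shows "dft n N (poly q) = coeff q n"
proof -
  have "dft n N (\<lambda>u. poly q (1 * u)) = (\<Sum>m<N. if m mod N = n then coeff q m * 1 ^ m else 0)"
    by (rule dft_poly_dilated[OF assms])
  also have "\<dots> = (\<Sum>m<N. if m = n then coeff q m else 0)"
    by (rule sum.cong) auto
  also have "\<dots> = coeff q n" using assms by simp
  finally show ?thesis by simp
qed

lemma coeff_norm_le_approx:
  fixes q :: "complex poly"
  assumes "\<And>u. cmod u \<le> 1 \<Longrightarrow> cmod (f u) \<le> M"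
    and "\<And>u. cmod u \<le> 1 \<Longrightarrow> cmod (f u - poly q u) \<le> e"
  shows "cmod (coeff q m) \<le> M + e"
proof -
  define N where "N = max m (degree q) + 1"
  have "coeff q m = dft m N (poly q)"
    by (rule dft_poly[symmetric]) (auto simp: N_def)
  also have "cmod \<dots> \<le> M + e"
  proof (rule dft_norm_le)
    show "N > 0" by (simp add: N_def)
    fix u :: complex assume u: "cmod u = 1"
    have "cmod (poly q u) \<le> cmod (f u) + cmod (f u - poly q u)"
      using norm_triangle_ineq4[of "f u" "f u - poly q u"] by simp
    moreover have "cmod (f u) \<le> M" "cmod (f u - poly q u) \<le> e" using assms u by auto
    ultimately show "cmod (poly q u) \<le> M + e" by linarith
  qed
  finally show ?thesis .
qed

lemma dft_close_to_coeff:
  fixes q :: "complex poly"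
  assumes "n < N" "degree q < N"
    and "\<And>u. cmod u \<le> 1 \<Longrightarrow> cmod (f u - poly q u) \<le> e"
  shows "cmod (dft n N f - coeff q n) \<le> e"
proof -
  have "dft n N f - coeff q n = dft n N (\<lambda>u. f u - poly q u)"
    using dft_poly[OF assms(1,2)] by (simp add: dft_diff)
  also have "cmod \<dots> \<le> e"
    by (rule dft_norm_le) (use assms in auto)
  finally show ?thesis .
qed

subsection \<open>Taylor coefficients of uniform limits of polynomials on the closed disc\<close>

definition poly_approximable :: "(complex \<Rightarrow> complex) \<Rightarrow> bool" where
  "poly_approximable f \<longleftrightarrow> (\<forall>e>0. \<exists>q. \<forall>u. cmod u \<le> 1 \<longrightarrow> cmod (f u - poly q u) \<le> e)"

definition taylor_coeff :: "(complex \<Rightarrow> complex) \<Rightarrow> nat \<Rightarrow> complex" where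
  "taylor_coeff f n = lim (\<lambda>N. dft n N f)"

text \<open>The discrete Fourier coefficients form a Cauchy sequence, since for large \<open>N\<close> they are all
  close to the coefficient of one approximating polynomial.\<close>

lemma taylor_coeff_limit:
  assumes "poly_approximable f"
  shows "(\<lambda>N. dft n N f) \<longlonglongrightarrow> taylor_coeff f n"
proof -
  have "Cauchy (\<lambda>N. dft n N f)"
  proof (rule metric_CauchyI)
    fix e :: real assume e: "e > 0"
    have e3: "e/3 > 0" using e by simp
    obtain q where q: "\<And>u. cmod u \<le> 1 \<Longrightarrow> cmod (f u - poly q u) \<le> e/3"
      using assms e3 unfolding poly_approximable_def by blast
    define M where "M = max n (degree q) + 1"
    have "dist (dft n N1 f) (dft n N2 f) < e" if "N1 \<ge> M" "N2 \<ge> M" for N1 N2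
    proof -
      have a: "cmod (dft n N1 f - coeff q n) \<le> e/3"
        by (rule dft_close_to_coeff) (use that q in \<open>auto simp: M_def\<close>)
      have b: "cmod (dft n N2 f - coeff q n) \<le> e/3"
        by (rule dft_close_to_coeff) (use that q in \<open>auto simp: M_def\<close>)
      have "dist (dft n N1 f) (dft n N2 f) \<le> cmod (dft n N1 f - coeff q n) + cmod (dft n N2 f - coeff q n)"
        using norm_triangle_ineq4[of "dft n N1 f - coeff q n" "dft n N2 f - coeff q n"] by (simp add: dist_norm)
      then show ?thesis using a b e by linarith
    qed
    then show "\<exists>M. \<forall>m\<ge>M. \<forall>k\<ge>M. dist (dft n m f) (dft n k f) < e" by blast
  qed
  then show ?thesis unfolding taylor_coeff_def by (simp add: Cauchy_convergent_iff convergent_LIMSEQ_iff)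
qed

lemma taylor_coeff_close:
  fixes q :: "complex poly"
  assumes "poly_approximable f" "\<And>u. cmod u \<le> 1 \<Longrightarrow> cmod (f u - poly q u) \<le> e"
  shows "cmod (taylor_coeff f n - coeff q n) \<le> e"
proof -
  have "(\<lambda>N. cmod (dft n N f - coeff q n)) \<longlonglongrightarrow> cmod (taylor_coeff f n - coeff q n)"
    by (intro tendsto_intros taylor_coeff_limit assms)
  moreover have "\<forall>N\<ge>max n (degree q) + 1. cmod (dft n N f - coeff q n) \<le> e"
    using assms(2) by (auto intro!: dft_close_to_coeff)
  then have "\<exists>N0. \<forall>N\<ge>N0. cmod (dft n N f - coeff q n) \<le> e" by blast
  ultimately show ?thesis by (rule LIMSEQ_le_const2)
qed

lemma geometric_tail_le:
  fixes t :: real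
  assumes "0 \<le> t" "t < 1"
  shows "(\<Sum>m<K. if N \<le> m then t ^ m else 0) \<le> t ^ N / (1 - t)"
proof -
  have t1: "1 - t \<noteq> 0" using assms by simp
  have "(\<Sum>m<K. if N \<le> m then t ^ m else 0) = (if N \<le> K then (t ^ N - t ^ K) / (1 - t) else 0)"
  proof (induction K)
    case 0 then show ?case by simp
  next
    case (Suc K)
    show ?case
    proof (cases "N \<le> K")
      case True
      have "(t ^ N - t ^ K) / (1 - t) + t ^ K = (t ^ N - t ^ Suc K) / (1 - t)"
        using t1 by (simp add: field_simps)
      then show ?thesis using Suc.IH True by simp
    next
      case False
      then show ?thesis using Suc.IH by (cases "N = Suc K") auto
    qed
  qed
  also have "\<dots> \<le> t ^ N / (1 - t)"
  proof -
    have "(t ^ N - t ^ K) / (1 - t) \<le> t ^ N / (1 - t)"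
      using assms by (intro divide_right_mono) auto
    moreover have "0 \<le> t ^ N / (1 - t)" using assms by simp
    ultimately show ?thesis by simp
  qed
  finally show ?thesis .
qed

lemma sum_restrict_lessThan:
  fixes N0 K :: nat
  assumes "N0 \<le> K"
  shows "(\<Sum>m<K. if m < N0 then F m else 0) = (\<Sum>m<N0. F m)"
proof -
  have "(\<Sum>m<K. if m < N0 then F m else 0) = sum F {m\<in>{..<K}. m < N0}"
    by (rule sum.inter_filter[symmetric]) simp
  also have "{m\<in>{..<K}. m < N0} = {..<N0}" using assms by auto
  finally show ?thesis .
qed

lemma le_by_scaled_epsilon:
  fixes x y C :: real
  assumes "C \<ge> 0" "\<And>e. e > 0 \<Longrightarrow> x \<le> y + C * e"
  shows "x \<le> y"
proof (rule field_le_epsilon)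
  fix e :: real assume "e > 0"
  then have "e / (C + 1) > 0" using assms by simp
  from assms(2)[OF this] have "x \<le> y + C * (e / (C+1))" .
  also have "C * (e / (C+1)) \<le> e" using assms \<open>e>0\<close> by (simp add: field_simps)
  finally show "x \<le> y + e" by simp
qed

lemma norm_diff_triangle3:
  fixes a b c d :: "'a::real_normed_vector"
  shows "norm (a - d) \<le> norm (a - b) + norm (b - c) + norm (c - d)"
proof -
  have "a - d = (a - b) + (b - c) + (c - d)" by simp
  then have "norm (a - d) = norm ((a - b) + (b - c) + (c - d))" by simp
  also have "\<dots> \<le> norm ((a - b) + (b - c)) + norm (c - d)" by (rule norm_triangle_ineq)
  also have "norm ((a - b) + (b - c)) \<le> norm (a - b) + norm (b - c)" by (rule norm_triangle_ineq)
  finally show ?thesis by simp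
qed

lemma tail_norm_le:
  fixes t :: real and c :: "nat \<Rightarrow> complex"
  assumes t: "0 \<le> t" "t < 1" and cb: "\<And>m. cmod (c m) \<le> B"
    and P: "\<And>m. P m \<Longrightarrow> N \<le> m"
  shows "cmod (\<Sum>m<K. if P m then c m * of_real t ^ m else 0) \<le> B * (t ^ N / (1 - t))"
proof -
  have B0: "0 \<le> B" using cb[of 0] by (meson norm_ge_zero order_trans)
  have "cmod (\<Sum>m<K. if P m then c m * of_real t ^ m else 0) \<le> (\<Sum>m<K. B * (if N \<le> m then t ^ m else 0))"
  proof (rule sum_norm_le)
    fix m assume "m \<in> {..<K}"
    show "cmod (if P m then c m * of_real t ^ m else 0) \<le> B * (if N \<le> m then t ^ m else 0)"
    proof (cases "P m")
      case True
      then have "N \<le> m" by (rule P)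
      moreover have "cmod (c m) * t ^ m \<le> B * t ^ m" using cb[of m] t by (simp add: mult_right_mono)
      ultimately show ?thesis using True t by (simp add: norm_mult norm_power)
    next
      case False then show ?thesis using B0 t by simp
    qed
  qed
  also have "\<dots> = B * (\<Sum>m<K. if N \<le> m then t ^ m else 0)" by (simp add: sum_distrib_left)
  also have "\<dots> \<le> B * (t ^ N / (1 - t))" by (rule mult_left_mono[OF geometric_tail_le[OF t] B0])
  finally show ?thesis .
qed

lemma poly_truncation_error:
  fixes q :: "complex poly" and t :: real
  assumes t: "0 \<le> t" "t < 1" and cb: "\<And>m. cmod (coeff q m) \<le> B"
  shows "cmod (poly q (of_real t) - (\<Sum>n<N0. coeff q n * of_real t ^ n)) \<le> B * (t ^ N0 / (1 - t))"
proof -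
  define K where "K = degree q + 1 + N0"
  have Kq: "degree q < K" and nK: "N0 \<le> K" by (auto simp: K_def)
  let ?c = "coeff q" and ?t = "complex_of_real t"
  have "poly q ?t = (\<Sum>m<K. ?c m * ?t ^ m)" by (rule poly_as_sum[OF Kq])
  also have "\<dots> = (\<Sum>m<K. (if m < N0 then ?c m * ?t ^ m else 0) + (if N0 \<le> m then ?c m * ?t ^ m else 0))"
    by (rule sum.cong) auto
  also have "\<dots> = (\<Sum>n<N0. ?c n * ?t ^ n) + (\<Sum>m<K. if N0 \<le> m then ?c m * ?t ^ m else 0)"
    by (simp only: sum.distrib sum_restrict_lessThan[OF nK])
  finally have "poly q ?t - (\<Sum>n<N0. ?c n * ?t ^ n) = (\<Sum>m<K. if N0 \<le> m then ?c m * ?t ^ m else 0)"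
    by simp
  also have "cmod \<dots> \<le> B * (t ^ N0 / (1 - t))"
    by (rule tail_norm_le[OF t cb]) auto
  finally show ?thesis .
qed

text \<open>The \<open>n\<close>-th discrete Fourier coefficient of a dilated polynomial differs from its \<open>n\<close>-th
  Taylor term only by aliased coefficients of index \<open>\<ge> N\<close>.\<close>

lemma dft_dilated_poly_error:
  fixes q :: "complex poly" and t :: real
  assumes t: "0 \<le> t" "t < 1" and nN: "n < N" and cb: "\<And>m. cmod (coeff q m) \<le> B"
  shows "cmod (dft n N (\<lambda>u. poly q (of_real t * u)) - of_real t ^ n * coeff q n) \<le> B * (t ^ N / (1 - t))"
proof -
  define K where "K = degree q + 1 + N"
  have Kq: "degree q < K" and nK: "n < K" using nN by (auto simp: K_def)
  let ?c = "coeff q" and ?t = "complex_of_real t"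
  have "dft n N (\<lambda>u. poly q (?t*u)) = (\<Sum>m<K. if m mod N = n then ?c m * ?t ^ m else 0)"
    by (rule dft_poly_dilated[OF nN Kq])
  also have "\<dots> = (\<Sum>m<K. (if m = n then ?c m * ?t ^ m else 0)
                   + (if m mod N = n \<and> m \<noteq> n then ?c m * ?t ^ m else 0))"
    by (rule sum.cong) (use nN in auto)
  also have "\<dots> = ?t ^ n * ?c n + (\<Sum>m<K. if m mod N = n \<and> m \<noteq> n then ?c m * ?t ^ m else 0)"
    using nK by (simp add: sum.distrib mult.commute)
  finally have "dft n N (\<lambda>u. poly q (?t*u)) - ?t ^ n * ?c n
      = (\<Sum>m<K. if m mod N = n \<and> m \<noteq> n then ?c m * ?t ^ m else 0)" by simp
  also have "cmod \<dots> \<le> B * (t ^ N / (1 - t))"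
    by (rule tail_norm_le[OF t cb]) (use nN in \<open>metis mod_less not_le\<close>)
  finally show ?thesis .
qed

lemma taylor_coeff_dilate:
  assumes f: "poly_approximable f" and s: "cmod s \<le> 1"
  shows "poly_approximable (\<lambda>u. f (s * u))" and "taylor_coeff (\<lambda>u. f (s * u)) n = s ^ n * taylor_coeff f n"
proof -
  have dil: "cmod (f (s * u) - poly (pcompose q [:0, s:]) u) \<le> e"
    if q: "\<And>u. cmod u \<le> 1 \<Longrightarrow> cmod (f u - poly q u) \<le> e" and u: "cmod u \<le> 1" for q e u
  proof -
    have "cmod (s * u) \<le> 1" using s u by (simp add: norm_mult mult_le_one)
    moreover have "poly (pcompose q [:0, s:]) u = poly q (s * u)" by (simp add: poly_pcompose mult.commute)
    ultimately show ?thesis using q by simp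
  qed
  then show fs: "poly_approximable (\<lambda>u. f (s * u))"
    using f unfolding poly_approximable_def by meson
  show "taylor_coeff (\<lambda>u. f (s * u)) n = s ^ n * taylor_coeff f n"
  proof (rule ccontr)
    assume "taylor_coeff (\<lambda>u. f (s * u)) n \<noteq> s ^ n * taylor_coeff f n"
    then have e: "cmod (taylor_coeff (\<lambda>u. f (s * u)) n - s ^ n * taylor_coeff f n) / 3 > 0" by simp
    then obtain q where q: "\<And>u. cmod u \<le> 1 \<Longrightarrow> cmod (f u - poly q u)
        \<le> cmod (taylor_coeff (\<lambda>u. f (s * u)) n - s ^ n * taylor_coeff f n) / 3"
      using f unfolding poly_approximable_def by blast
    have 1: "cmod (taylor_coeff (\<lambda>u. f (s * u)) n - s ^ n * coeff q n)
        \<le> cmod (taylor_coeff (\<lambda>u. f (s * u)) n - s ^ n * taylor_coeff f n) / 3"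
      using taylor_coeff_close[OF fs dil[OF q]] by (simp add: coeff_pcompose_linear)
    have "cmod (s ^ n * coeff q n - s ^ n * taylor_coeff f n) = cmod s ^ n * cmod (taylor_coeff f n - coeff q n)"
      by (simp add: norm_mult norm_power norm_minus_commute right_diff_distrib[symmetric])
    also have "\<dots> \<le> 1 * cmod (taylor_coeff f n - coeff q n)"
      using s by (intro mult_right_mono power_le_one) auto
    also have "\<dots> \<le> cmod (taylor_coeff (\<lambda>u. f (s * u)) n - s ^ n * taylor_coeff f n) / 3"
      using taylor_coeff_close[OF f q] by simp
    finally show False
      using 1 norm_triangle_ineq[of "taylor_coeff (\<lambda>u. f (s * u)) n - s ^ n * coeff q n"
                                    "s ^ n * coeff q n - s ^ n * taylor_coeff f n"] e by simp
  qed
qed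

lemma taylor_term_close:
  fixes q :: "complex poly" and t :: real
  assumes f: "poly_approximable f" and q: "\<And>u. cmod u \<le> 1 \<Longrightarrow> cmod (f u - poly q u) \<le> e"
    and t: "0 \<le> t" "t \<le> 1"
  shows "cmod (coeff q n * of_real t ^ n - taylor_coeff f n * of_real t ^ n) \<le> e"
proof -
  have "cmod (coeff q n * of_real t ^ n - taylor_coeff f n * of_real t ^ n)
      = t ^ n * cmod (taylor_coeff f n - coeff q n)"
    using t by (simp add: left_diff_distrib[symmetric] norm_mult norm_power norm_minus_commute)
  also have "\<dots> \<le> 1 * e"
    using taylor_coeff_close[OF f q] t by (intro mult_mono power_le_one) auto
  finally show ?thesis by simp
qed

lemma dft_dilated_estimate:
  assumes f: "poly_approximable f" and bd: "\<And>u. cmod u \<le> 1 \<Longrightarrow> cmod (f u) \<le> M"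
    and t: "0 \<le> t" "t < 1" and nN: "n < N"
  shows "cmod (dft n N (\<lambda>u. f (of_real t * u)) - of_real t ^ n * taylor_coeff f n) \<le> M * (t ^ N / (1 - t))"
proof (rule le_by_scaled_epsilon[where C = "2 + t ^ N / (1 - t)"])
  show "0 \<le> 2 + t ^ N / (1 - t)" using t by simp
  fix e :: real assume e: "e > 0"
  obtain q where q: "\<And>u. cmod u \<le> 1 \<Longrightarrow> cmod (f u - poly q u) \<le> e"
    using f e unfolding poly_approximable_def by blast
  let ?t = "complex_of_real t"
  have A: "cmod (dft n N (\<lambda>u. f (?t*u)) - dft n N (\<lambda>u. poly q (?t*u))) \<le> e"
    unfolding dft_diff[symmetric]
  proof (rule dft_norm_le)
    fix u :: complex assume "cmod u = 1"
    then have "cmod (?t*u) \<le> 1" using t by (simp add: norm_mult)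
    then show "cmod (f (?t*u) - poly q (?t*u)) \<le> e" by (rule q)
  qed (use nN in simp)
  have B: "cmod (dft n N (\<lambda>u. poly q (?t*u)) - ?t ^ n * coeff q n) \<le> (M + e) * (t ^ N / (1 - t))"
    by (rule dft_dilated_poly_error[OF t nN coeff_norm_le_approx[OF bd q]])
  have C: "cmod (?t ^ n * coeff q n - ?t ^ n * taylor_coeff f n) \<le> e"
    using taylor_term_close[OF f q, of t n] t by (simp add: mult.commute)
  have "cmod (dft n N (\<lambda>u. f (?t*u)) - ?t ^ n * taylor_coeff f n) \<le> e + (M + e) * (t ^ N / (1 - t)) + e"
    using norm_diff_triangle3[where a = "dft n N (\<lambda>u. f (?t*u))" and b = "dft n N (\<lambda>u. poly q (?t*u))"
        and c = "?t ^ n * coeff q n" and d = "?t ^ n * taylor_coeff f n"] A B C by linarith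
  moreover have "e + (M + e) * x + e = M * x + (2 + x) * e" for x :: real by (simp add: algebra_simps)
  ultimately show "cmod (dft n N (\<lambda>u. f (?t*u)) - ?t ^ n * taylor_coeff f n)
      \<le> M * (t ^ N / (1 - t)) + (2 + t ^ N / (1 - t)) * e"
    by metis
qed

lemma taylor_remainder_estimate:
  assumes f: "poly_approximable f" and bd: "\<And>u. cmod u \<le> 1 \<Longrightarrow> cmod (f u) \<le> M"
    and t: "0 \<le> t" "t < 1"
  shows "cmod (f (of_real t) - (\<Sum>n<N0. taylor_coeff f n * of_real t ^ n)) \<le> M * (t ^ N0 / (1 - t))"
proof (rule le_by_scaled_epsilon[where C = "1 + of_nat N0 + t ^ N0 / (1 - t)"])
  show "0 \<le> 1 + of_nat N0 + t ^ N0 / (1 - t)" using t by simp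
  fix e :: real assume e: "e > 0"
  obtain q where q: "\<And>u. cmod u \<le> 1 \<Longrightarrow> cmod (f u - poly q u) \<le> e"
    using f e unfolding poly_approximable_def by blast
  let ?t = "complex_of_real t"
  have A: "cmod (f ?t - poly q ?t) \<le> e" by (rule q) (use t in simp)
  have B: "cmod (poly q ?t - (\<Sum>n<N0. coeff q n * ?t ^ n)) \<le> (M + e) * (t ^ N0 / (1 - t))"
    by (rule poly_truncation_error[OF t coeff_norm_le_approx[OF bd q]])
  have "cmod ((\<Sum>n<N0. coeff q n * ?t ^ n) - (\<Sum>n<N0. taylor_coeff f n * ?t ^ n))
      \<le> (\<Sum>n<N0. cmod (coeff q n * ?t ^ n - taylor_coeff f n * ?t ^ n))"
    unfolding sum_subtractf[symmetric] by (rule norm_sum)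
  also have "\<dots> \<le> (\<Sum>n<N0. e)"
    by (intro sum_mono taylor_term_close[OF f q]) (use t in auto)
  finally have C: "cmod ((\<Sum>n<N0. coeff q n * ?t ^ n) - (\<Sum>n<N0. taylor_coeff f n * ?t ^ n))
      \<le> of_nat N0 * e" by simp
  have "cmod (f ?t - (\<Sum>n<N0. taylor_coeff f n * ?t ^ n)) \<le> e + (M + e) * (t ^ N0 / (1 - t)) + of_nat N0 * e"
    using norm_diff_triangle3[where a = "f ?t" and b = "poly q ?t" and c = "\<Sum>n<N0. coeff q n * ?t ^ n"
        and d = "\<Sum>n<N0. taylor_coeff f n * ?t ^ n"] A B C by linarith
  moreover have "e + (M + e) * x + of_nat N0 * e = M * x + (1 + of_nat N0 + x) * e" for x :: real
    by (simp add: algebra_simps)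
  ultimately show "cmod (f ?t - (\<Sum>n<N0. taylor_coeff f n * ?t ^ n))
      \<le> M * (t ^ N0 / (1 - t)) + (1 + of_nat N0 + t ^ N0 / (1 - t)) * e"
    by metis
qed

subsection \<open>Finite type polynomials\<close>

lemma ftpoly_cmult: "p \<in> ftpoly \<Longrightarrow> (\<lambda>x. c * p x) \<in> ftpoly"
  using ftpoly.mult[OF ftpoly.const] by blast

lemma ftpoly_comp_affine:
  fixes L :: "'b::complex_normed_vector \<Rightarrow> 'a::complex_normed_vector"
  assumes "p \<in> ftpoly" "bounded_clinear L"
  shows "(\<lambda>y. p (x0 + L y)) \<in> ftpoly"
  using assms(1)
proof induction
  case (const c) then show ?case by (rule ftpoly.const)
next
  case (dual \<phi>)
  have bl: "bounded_linear \<phi>" and h: "\<And>c x. \<phi> (scaleC c x) = c * \<phi> x"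
    using dual by (auto simp: cdual_def)
  have "(\<lambda>y. \<phi> (L y)) \<in> cdual"
    using assms(2) bounded_linear_compose[OF bl, of L] unfolding cdual_def bounded_clinear_def
    by (auto simp: o_def h)
  then have "(\<lambda>y. \<phi> x0 + \<phi> (L y)) \<in> ftpoly"
    by (intro ftpoly.add ftpoly.const ftpoly.dual)
  then show ?case by (simp add: linear_add[OF bounded_linear.linear[OF bl]])
next
  case (add p q) from add.IH show ?case by (rule ftpoly.add)
next
  case (mult p q) from mult.IH show ?case by (rule ftpoly.mult)
qed

lemma ftpoly_on_line:
  assumes "p \<in> ftpoly"
  shows "\<exists>q. \<forall>u. p (scaleC u w) = poly q u"
  using assms
proof induction
  case (const c) then show ?case by (intro exI[of _ "[:c:]"]) simp
next
  case (dual \<phi>)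
  then have h: "\<And>c x. \<phi> (scaleC c x) = c * \<phi> x" by (auto simp: cdual_def)
  show ?case by (intro exI[of _ "[:0, \<phi> w:]"]) (simp add: h)
next
  case (add p q)
  then obtain q1 q2 where "\<forall>u. p (scaleC u w) = poly q1 u" "\<forall>u. q (scaleC u w) = poly q2 u" by blast
  then show ?case by (intro exI[of _ "q1 + q2"]) simp
next
  case (mult p q)
  then obtain q1 q2 where "\<forall>u. p (scaleC u w) = poly q1 u" "\<forall>u. q (scaleC u w) = poly q2 u" by blast
  then show ?case by (intro exI[of _ "q1 * q2"]) simp
qed

lemma ftpoly_bounded:
  assumes "p \<in> ftpoly"
  shows "\<exists>B. \<forall>x\<in>ball 0 1. cmod (p x) \<le> B"
  using assms
proof induction
  case (const c) then show ?case by auto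
next
  case (dual \<phi>)
  then have bl: "bounded_linear \<phi>" by (auto simp: cdual_def)
  obtain K where K: "K > 0" "\<And>x. cmod (\<phi> x) \<le> norm x * K"
    using bounded_linear.pos_bounded[OF bl] by blast
  have "cmod (\<phi> x) \<le> K" if "x \<in> ball 0 1" for x
  proof -
    have "norm x * K \<le> 1 * K" using that K by (intro mult_right_mono) auto
    then show ?thesis using K(2)[of x] by simp
  qed
  then show ?case by blast
next
  case (add p q)
  then obtain B1 B2 where "\<forall>x\<in>ball 0 1. cmod (p x) \<le> B1" "\<forall>x\<in>ball 0 1. cmod (q x) \<le> B2" by blast
  then have "\<forall>x\<in>ball 0 1. cmod (p x + q x) \<le> B1 + B2" by (meson add_mono norm_triangle_le)
  then show ?case by blast
next
  case (mult p q)
  then obtain B1 B2 where "\<forall>x\<in>ball 0 1. cmod (p x) \<le> B1" "\<forall>x\<in>ball 0 1. cmod (q x) \<le> B2" by blast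
  then have "\<forall>x\<in>ball 0 1. cmod (p x * q x) \<le> B1 * B2"
    by (auto simp: norm_mult intro!: mult_mono order_trans[OF norm_ge_zero])
  then show ?case by blast
qed

lemma ftpoly_lipschitz:
  assumes "p \<in> ftpoly"
  shows "\<exists>K. \<forall>x\<in>ball 0 1. \<forall>y\<in>ball 0 1. cmod (p x - p y) \<le> K * norm (x - y)"
  using assms
proof induction
  case (const c) then show ?case by (intro exI[of _ 0]) simp
next
  case (dual \<phi>)
  then have bl: "bounded_linear \<phi>" by (auto simp: cdual_def)
  obtain K where K: "\<And>x. cmod (\<phi> x) \<le> norm x * K" using bounded_linear.bounded[OF bl] by blast
  have "cmod (\<phi> x - \<phi> y) \<le> K * norm (x - y)" for x y
    using K[of "x - y"] by (simp add: linear_diff[OF bounded_linear.linear[OF bl]] mult.commute)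
  then show ?case by blast
next
  case (add p q)
  then obtain K1 K2 where 1: "\<forall>x\<in>ball 0 1. \<forall>y\<in>ball 0 1. cmod (p x - p y) \<le> K1 * norm (x - y)"
    and 2: "\<forall>x\<in>ball 0 1. \<forall>y\<in>ball 0 1. cmod (q x - q y) \<le> K2 * norm (x - y)" by blast
  have "cmod ((p x + q x) - (p y + q y)) \<le> (K1 + K2) * norm (x - y)"
    if "x \<in> ball 0 1" "y \<in> ball 0 1" for x y
  proof -
    have "cmod ((p x + q x) - (p y + q y)) \<le> cmod (p x - p y) + cmod (q x - q y)"
      by (metis add_diff_add norm_triangle_ineq)
    also have "\<dots> \<le> K1 * norm (x - y) + K2 * norm (x - y)" using 1 2 that by (meson add_mono)
    finally show ?thesis by (simp add: distrib_right)
  qed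
  then show ?case by blast
next
  case (mult p q)
  then obtain K1 K2 where 1: "\<forall>x\<in>ball 0 1. \<forall>y\<in>ball 0 1. cmod (p x - p y) \<le> K1 * norm (x - y)"
    and 2: "\<forall>x\<in>ball 0 1. \<forall>y\<in>ball 0 1. cmod (q x - q y) \<le> K2 * norm (x - y)" by blast
  obtain B1 B2 where B1: "\<forall>x\<in>ball 0 1. cmod (p x) \<le> B1" and B2: "\<forall>x\<in>ball 0 1. cmod (q x) \<le> B2"
    using ftpoly_bounded[OF mult.hyps(1)] ftpoly_bounded[OF mult.hyps(2)] by blast
  have B0: "0 \<le> B1" "0 \<le> B2"
    using bspec[OF B1, of 0] bspec[OF B2, of 0] by (auto intro: order_trans[OF norm_ge_zero])
  have "cmod (p x * q x - p y * q y) \<le> (B1 * K2 + B2 * K1) * norm (x - y)"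
    if xy: "x \<in> ball 0 1" "y \<in> ball 0 1" for x y
  proof -
    have "p x * q x - p y * q y = p x * (q x - q y) + q y * (p x - p y)" by (simp add: algebra_simps)
    then have "cmod (p x * q x - p y * q y) \<le> cmod (p x) * cmod (q x - q y) + cmod (q y) * cmod (p x - p y)"
      by (metis norm_mult norm_triangle_ineq)
    also have "\<dots> \<le> B1 * (K2 * norm (x - y)) + B2 * (K1 * norm (x - y))"
      using 1 2 B1 B2 xy B0 by (intro add_mono mult_mono) auto
    finally show ?thesis by (simp add: algebra_simps)
  qed
  then show ?case by blast
qed

lemma ftpoly_uniformly_continuous:
  fixes p :: "'a::complex_normed_vector \<Rightarrow> complex"
  assumes "p \<in> ftpoly"
  shows "uniformly_continuous_on (ball 0 1) p"
proof -
  obtain K where K: "\<forall>x\<in>ball 0 1. \<forall>y\<in>ball 0 1. cmod (p x - p y) \<le> K * norm (x - y)"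
    using ftpoly_lipschitz[OF assms] by blast
  have "(max K 0)-lipschitz_on (ball 0 1) p"
  proof (rule lipschitz_onI)
    fix x y :: 'a assume "x \<in> ball 0 1" "y \<in> ball 0 1"
    then have "cmod (p x - p y) \<le> K * norm (x - y)" using K by blast
    also have "\<dots> \<le> max K 0 * norm (x - y)" by (intro mult_right_mono) auto
    finally show "dist (p x) (p y) \<le> max K 0 * dist x y" by (simp add: dist_norm)
  qed simp
  then show ?thesis by (rule lipschitz_on_uniformly_continuous)
qed

lemma ftpoly_constant_if_trivial_dual:
  assumes "\<forall>\<phi>\<in>(cdual :: ('a::complex_normed_vector \<Rightarrow> complex) set). \<forall>x. \<phi> x = 0"
    and "(p :: 'a \<Rightarrow> complex) \<in> ftpoly"
  shows "\<exists>c. \<forall>x. p x = c"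
  using assms(2)
proof induction
  case (dual \<phi>) then show ?case using assms(1) by blast
qed auto

subsection \<open>The algebra \<open>A(B_Z)\<close>\<close>

lemma uniformly_continuous_on_uniform_approx:
  fixes f :: "'a::metric_space \<Rightarrow> 'b::metric_space"
  assumes "\<And>e. e > 0 \<Longrightarrow> \<exists>h. uniformly_continuous_on S h \<and> (\<forall>x\<in>S. dist (f x) (h x) < e)"
  shows "uniformly_continuous_on S f"
  unfolding uniformly_continuous_on_def
proof (intro allI impI)
  fix e :: real assume "e > 0"
  then have e3: "e/3 > 0" by simp
  then obtain h where h: "uniformly_continuous_on S h" "\<forall>x\<in>S. dist (f x) (h x) < e/3"
    using assms by blast
  then obtain d where d: "d > 0" "\<forall>x\<in>S. \<forall>x'\<in>S. dist x' x < d \<longrightarrow> dist (h x') (h x) < e/3"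
    using e3 unfolding uniformly_continuous_on_def by blast
  have "dist (f x') (f x) < e" if "x \<in> S" "x' \<in> S" "dist x' x < d" for x x'
  proof -
    have "dist (f x') (h x') < e/3" "dist (h x') (h x) < e/3" "dist (h x) (f x) < e/3"
      using h(2) d(2) that by (auto simp: dist_commute)
    then show ?thesis
      using dist_triangle[of "f x'" "f x" "h x'"] dist_triangle[of "h x'" "f x" "h x"] by linarith
  qed
  with d(1) show "\<exists>d>0. \<forall>x\<in>S. \<forall>x'\<in>S. dist x' x < d \<longrightarrow> dist (f x') (f x) < e" by blast
qed

lemma in_A_uniform_limit:
  assumes "\<And>e. e > 0 \<Longrightarrow> \<exists>h. in_A h \<and> (\<forall>x\<in>ball 0 1. cmod (f x - h x) \<le> e)"
  shows "in_A f"
  unfolding in_A_def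
proof (intro allI impI)
  fix e :: real assume e: "e > 0"
  obtain h where h: "in_A h" "\<forall>x\<in>ball 0 1. cmod (f x - h x) \<le> e/2" using assms[of "e/2"] e by auto
  obtain p where p: "p \<in> ftpoly" "\<forall>x\<in>ball 0 1. cmod (h x - p x) < e/2"
    using h(1) e unfolding in_A_def by (meson half_gt_zero)
  have "cmod (f x - p x) < e" if "x \<in> ball 0 1" for x
  proof -
    have "cmod (f x - p x) \<le> cmod (f x - h x) + cmod (h x - p x)"
      using norm_triangle_ineq[of "f x - h x" "h x - p x"] by simp
    then show ?thesis using bspec[OF h(2) that] bspec[OF p(2) that] by linarith
  qed
  with p(1) show "\<exists>p\<in>ftpoly. \<forall>x\<in>ball 0 1. cmod (f x - p x) < e" by blast
qed

lemma in_A_bounded: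
  assumes "in_A g"
  shows "bounded (g ` ball 0 1)"
proof -
  obtain p where p: "p \<in> ftpoly" "\<forall>x\<in>ball 0 1. cmod (g x - p x) < 1"
    using assms zero_less_one unfolding in_A_def by blast
  obtain B where B: "\<forall>x\<in>ball 0 1. cmod (p x) \<le> B" using ftpoly_bounded[OF p(1)] by blast
  have "cmod (g x) \<le> B + 1" if "x \<in> ball 0 1" for x
    using norm_triangle_ineq2[of "g x" "p x"] bspec[OF B that] bspec[OF p(2) that] by linarith
  then show ?thesis unfolding bounded_iff by blast
qed

lemma in_A_uniformly_continuous:
  assumes "in_A g"
  shows "uniformly_continuous_on (ball 0 1) g"
proof (rule uniformly_continuous_on_uniform_approx)
  fix e :: real assume "e > 0"
  then obtain p where "p \<in> ftpoly" "\<forall>x\<in>ball 0 1. cmod (g x - p x) < e"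
    using assms unfolding in_A_def by blast
  then show "\<exists>h. uniformly_continuous_on (ball 0 1) h \<and> (\<forall>x\<in>ball 0 1. dist (g x) (h x) < e)"
    using ftpoly_uniformly_continuous by (auto simp: dist_norm)
qed

lemma in_A_comp_affine:
  fixes g :: "'b::complex_normed_vector \<Rightarrow> complex" and L :: "'a::complex_normed_vector \<Rightarrow> 'b"
  assumes g: "in_A g" and L: "bounded_clinear L" and maps: "\<And>x. x \<in> ball 0 1 \<Longrightarrow> y0 + L x \<in> ball 0 1"
  shows "in_A (\<lambda>x. g (y0 + L x))"
  unfolding in_A_def
proof (intro allI impI)
  fix e :: real assume "e > 0"
  then obtain p where p: "p \<in> ftpoly" "\<forall>y\<in>ball 0 1. cmod (g y - p y) < e"
    using g unfolding in_A_def by blast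
  have "(\<lambda>x. p (y0 + L x)) \<in> ftpoly" by (rule ftpoly_comp_affine[OF p(1) L])
  moreover have "\<forall>x\<in>ball 0 1. cmod (g (y0 + L x) - p (y0 + L x)) < e" using p(2) maps by blast
  ultimately show "\<exists>p\<in>ftpoly. \<forall>x\<in>ball 0 1. cmod (g (y0 + L x) - p x) < e"
    by (intro bexI[where x = "\<lambda>x. p (y0 + L x)"]) auto
qed

lemma in_A_add:
  assumes "in_A f" "in_A g"
  shows "in_A (\<lambda>x. f x + g x)"
  unfolding in_A_def
proof (intro allI impI)
  fix e :: real assume "e > 0"
  then obtain p q where p: "p \<in> ftpoly" "\<forall>x\<in>ball 0 1. cmod (f x - p x) < e/2"
    and q: "q \<in> ftpoly" "\<forall>x\<in>ball 0 1. cmod (g x - q x) < e/2"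
    using assms unfolding in_A_def by (meson half_gt_zero)
  have "cmod ((f x + g x) - (p x + q x)) < e" if "x \<in> ball 0 1" for x
  proof -
    have "(f x + g x) - (p x + q x) = (f x - p x) + (g x - q x)" by simp
    then have "cmod ((f x + g x) - (p x + q x)) \<le> cmod (f x - p x) + cmod (g x - q x)"
      by (metis norm_triangle_ineq)
    then show ?thesis using bspec[OF p(2) that] bspec[OF q(2) that] by linarith
  qed
  then show "\<exists>r\<in>ftpoly. \<forall>x\<in>ball 0 1. cmod (f x + g x - r x) < e"
    using ftpoly.add[OF p(1) q(1)] by (intro bexI[where x = "\<lambda>x. p x + q x"]) auto
qed

lemma in_A_cmult:
  assumes "in_A f"
  shows "in_A (\<lambda>x. c * f x)"
  unfolding in_A_def
proof (intro allI impI)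
  fix e :: real assume "e > 0"
  moreover have c1: "cmod c + 1 > 0" using norm_ge_zero[of c] by linarith
  ultimately have "e / (cmod c + 1) > 0" by simp
  then obtain p where p: "p \<in> ftpoly" "\<forall>x\<in>ball 0 1. cmod (f x - p x) < e / (cmod c + 1)"
    using assms unfolding in_A_def by blast
  have "cmod (c * f x - c * p x) < e" if "x \<in> ball 0 1" for x
  proof -
    have "cmod (c * f x - c * p x) = cmod c * cmod (f x - p x)"
      by (simp add: right_diff_distrib[symmetric] norm_mult)
    also have "\<dots> \<le> (cmod c + 1) * cmod (f x - p x)" by (intro mult_right_mono) auto
    also have "\<dots> < (cmod c + 1) * (e / (cmod c + 1))"
      using bspec[OF p(2) that] by (intro mult_strict_left_mono) (simp_all add: c1)
    also have "\<dots> = e" using c1 by simp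
    finally show ?thesis .
  qed
  then show "\<exists>r\<in>ftpoly. \<forall>x\<in>ball 0 1. cmod (c * f x - r x) < e"
    using ftpoly_cmult[OF p(1)] by (intro bexI[where x = "\<lambda>x. c * p x"]) auto
qed

lemma in_A_sum:
  fixes N :: nat
  shows "(\<And>i. i < N \<Longrightarrow> in_A (F i)) \<Longrightarrow> in_A (\<lambda>x. \<Sum>i<N. F i x)"
proof (induction N)
  case 0
  show ?case unfolding in_A_def by (auto intro!: bexI[of _ "\<lambda>x. 0"] ftpoly.const)
next
  case (Suc N)
  then have "in_A (\<lambda>x. (\<Sum>i<N. F i x) + F N x)" by (intro in_A_add) auto
  then show ?case by simp
qed

subsection \<open>The algebra \<open>A_u(B_Z)\<close>\<close>

lemma uniformly_continuous_on_subset: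
  fixes f :: "'a::metric_space \<Rightarrow> 'b::metric_space"
  assumes "uniformly_continuous_on B f" "A \<subseteq> B"
  shows "uniformly_continuous_on A f"
  using assms unfolding uniformly_continuous_on_def by (meson subsetD)

lemma in_Au_comp_affine:
  fixes g :: "'b::complex_normed_vector \<Rightarrow> complex" and L :: "'a::complex_normed_vector \<Rightarrow> 'b"
  assumes g: "in_Au g" and L: "bounded_clinear L" and maps: "\<And>x. x \<in> ball 0 1 \<Longrightarrow> y0 + L x \<in> ball 0 1"
  shows "in_Au (\<lambda>x. g (y0 + L x))"
proof -
  have bl: "bounded_linear L" and h: "\<And>c x. L (scaleC c x) = scaleC c (L x)"
    using L by (auto simp: bounded_clinear_def)
  have img: "(\<lambda>x. y0 + L x) ` ball 0 1 \<subseteq> ball 0 1" using maps by auto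
  have "(\<lambda>x. g (y0 + L x)) ` ball 0 1 \<subseteq> g ` ball 0 1" using img by auto
  then have "bounded ((\<lambda>x. g (y0 + L x)) ` ball 0 1)"
    using g unfolding in_Au_def by (metis bounded_subset)
  moreover have "holomorphic_on_space (\<lambda>x. g (y0 + L x)) (ball 0 1)"
    unfolding holomorphic_on_space_def
  proof
    fix x :: 'a assume x: "x \<in> ball 0 1"
    obtain D where D: "(g has_derivative D) (at (y0 + L x))" "\<And>c v. D (scaleC c v) = c * D v"
      using g maps[OF x] unfolding in_Au_def holomorphic_on_space_def by blast
    have dL: "((\<lambda>x. y0 + L x) has_derivative L) (at x)"
      using has_derivative_add[OF has_derivative_const bounded_linear_imp_has_derivative[OF bl], of y0 "at x"]
      by simp
    have "((\<lambda>x. g (y0 + L x)) has_derivative (\<lambda>v. D (L v))) (at x)"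
      using diff_chain_at[OF dL D(1)] by (simp add: o_def)
    moreover have "D (L (scaleC c v)) = c * D (L v)" for c v by (simp add: h D(2))
    ultimately show "\<exists>D. ((\<lambda>x. g (y0 + L x)) has_derivative D) (at x) \<and> (\<forall>c v. D (scaleC c v) = c * D v)"
      by blast
  qed
  moreover have "uniformly_continuous_on (ball 0 1) (\<lambda>x. g (y0 + L x))"
  proof -
    have "uniformly_continuous_on (ball 0 1) (\<lambda>x. y0 + L x)"
      by (intro uniformly_continuous_on_add uniformly_continuous_on_const
          bounded_linear.uniformly_continuous_on[OF bl] uniformly_continuous_on_id)
    moreover have "uniformly_continuous_on ((\<lambda>x. y0 + L x) ` ball 0 1) g"
      using g img unfolding in_Au_def by (rule uniformly_continuous_on_subset[OF conjunct2[OF conjunct2]])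
    ultimately show ?thesis using uniformly_continuous_on_compose by (fastforce simp: o_def)
  qed
  ultimately show ?thesis unfolding in_Au_def by blast
qed

lemma in_Au_add:
  assumes "in_Au f" "in_Au g"
  shows "in_Au (\<lambda>x. f x + g x)"
proof -
  have "bounded ((\<lambda>x. f x + g x) ` ball 0 1)"
  proof -
    obtain B1 where "\<forall>x\<in>ball 0 1. cmod (f x) \<le> B1" using assms(1) unfolding in_Au_def bounded_iff by auto
    moreover obtain B2 where "\<forall>x\<in>ball 0 1. cmod (g x) \<le> B2" using assms(2) unfolding in_Au_def bounded_iff by auto
    ultimately have "\<forall>x\<in>ball 0 1. cmod (f x + g x) \<le> B1 + B2" by (meson add_mono norm_triangle_le)
    then show ?thesis unfolding bounded_iff by blast
  qed
  moreover have "holomorphic_on_space (\<lambda>x. f x + g x) (ball 0 1)"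
    unfolding holomorphic_on_space_def
  proof
    fix x :: 'a assume x: "x \<in> ball 0 1"
    obtain D1 where D1: "(f has_derivative D1) (at x)" "\<And>c v. D1 (scaleC c v) = c * D1 v"
      using assms(1) x unfolding in_Au_def holomorphic_on_space_def by blast
    obtain D2 where D2: "(g has_derivative D2) (at x)" "\<And>c v. D2 (scaleC c v) = c * D2 v"
      using assms(2) x unfolding in_Au_def holomorphic_on_space_def by blast
    show "\<exists>D. ((\<lambda>x. f x + g x) has_derivative D) (at x) \<and> (\<forall>c v. D (scaleC c v) = c * D v)"
      by (intro exI[of _ "\<lambda>v. D1 v + D2 v"] conjI has_derivative_add D1 D2)
         (simp add: D1(2) D2(2) distrib_left)
  qed
  moreover have "uniformly_continuous_on (ball 0 1) (\<lambda>x. f x + g x)"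
    using assms unfolding in_Au_def by (intro uniformly_continuous_on_add) auto
  ultimately show ?thesis unfolding in_Au_def by blast
qed

lemma in_Au_cmult:
  assumes "in_Au f"
  shows "in_Au (\<lambda>x. c * f x)"
proof -
  have "bounded ((\<lambda>x. c * f x) ` ball 0 1)"
  proof -
    obtain B1 where "\<forall>x\<in>ball 0 1. cmod (f x) \<le> B1" using assms(1) unfolding in_Au_def bounded_iff by auto
    then have "\<forall>x\<in>ball 0 1. cmod (c * f x) \<le> cmod c * B1" by (simp add: norm_mult mult_left_mono)
    then show ?thesis unfolding bounded_iff by blast
  qed
  moreover have "holomorphic_on_space (\<lambda>x. c * f x) (ball 0 1)"
    unfolding holomorphic_on_space_def
  proof
    fix x :: 'a assume x: "x \<in> ball 0 1"
    obtain D1 where D1: "(f has_derivative D1) (at x)" "\<And>c v. D1 (scaleC c v) = c * D1 v"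
      using assms(1) x unfolding in_Au_def holomorphic_on_space_def by blast
    show "\<exists>D. ((\<lambda>x. c * f x) has_derivative D) (at x) \<and> (\<forall>c v. D (scaleC c v) = c * D v)"
      by (intro exI[of _ "\<lambda>v. c * D1 v"] conjI has_derivative_mult_right D1)
         (simp add: D1(2) mult.left_commute)
  qed
  moreover have "uniformly_continuous_on (ball 0 1) (\<lambda>x. c * f x)"
    using assms unfolding in_Au_def by (intro uniformly_continuous_on_cmul_left) auto
  ultimately show ?thesis unfolding in_Au_def by blast
qed

lemma in_Au_zero: "in_Au (\<lambda>x::'a::complex_normed_vector. 0)"
proof -
  have "bounded ((\<lambda>x::'a. 0::complex) ` ball 0 1)" unfolding bounded_iff by auto
  then show ?thesis unfolding in_Au_def holomorphic_on_space_def
    by (auto intro!: exI[of _ "\<lambda>v. 0"] uniformly_continuous_on_const)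
qed

lemma in_Au_sum: fixes N :: nat shows "(\<And>i. i < N \<Longrightarrow> in_Au (F i)) \<Longrightarrow> in_Au (\<lambda>x. \<Sum>i<N. F i x)"
proof (induction N)
  case 0 then show ?case using in_Au_zero by simp
next
  case (Suc N)
  then have "in_Au (\<lambda>x. (\<Sum>i<N. F i x) + F N x)" by (intro in_Au_add) auto
  then show ?case by simp
qed

subsection \<open>Affine charts between the unit balls of isomorphic spaces\<close>

text \<open>Around
  every point \<open>a\<close> of \<open>B_Y\<close> the affine map \<open>x \<mapsto> a + s T'(x)\<close> sends \<open>B_X\<close> into \<open>B_Y\<close>, and it has
  the globally defined affine inverse \<open>\<beta>(y) = T(y - a)/s\<close>, whose derivative is complex-linear.\<close>

lemma ball_chart:
  fixes T :: "'y::complex_normed_vector \<Rightarrow> 'x::complex_normed_vector"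
  assumes T: "bounded_clinear T" and T': "bounded_linear T'" and inv: "\<And>y. T' (T y) = y"
    and a: "norm a < 1"
  obtains s \<beta> L where "s > 0" "\<And>x. norm x < 1 \<Longrightarrow> norm (a + scaleR s (T' x)) < 1"
    "\<And>y. a + scaleR s (T' (\<beta> y)) = y" "\<beta> a = 0"
    "bounded_clinear L" "\<And>y. (\<beta> has_derivative L) (at y)"
proof -
  obtain c where c: "c > 0" "\<And>x. norm (T' x) \<le> norm x * c"
    using bounded_linear.pos_bounded[OF T'] by blast
  define s where "s = (1 - norm a) / (c + 1)"
  have s: "s > 0" using a c by (simp add: s_def)
  define L where "L = (\<lambda>v. scaleR (1/s) (T v))"
  define \<beta> where "\<beta> = (\<lambda>y. L y - L a)"
  have L: "bounded_clinear L" unfolding L_def by (rule bounded_clinear_scaleR[OF T])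
  have maps: "norm (a + scaleR s (T' x)) < 1" if "norm x < 1" for x
  proof -
    have "norm (a + scaleR s (T' x)) \<le> norm a + s * norm (T' x)"
      using s by (metis abs_of_pos norm_scaleR norm_triangle_ineq)
    also have "s * norm (T' x) \<le> s * (norm x * c)" using c(2)[of x] s by (simp add: mult_left_mono)
    also have "s * (norm x * c) < s * (c + 1)"
    proof -
      have "norm x * c \<le> 1 * c" using that c by (intro mult_right_mono) auto
      then show ?thesis using s by (intro mult_strict_left_mono) auto
    qed
    also have "norm a + s * (c + 1) = 1" using c by (simp add: s_def)
    finally show ?thesis by simp
  qed
  have lin: "linear T'" using T' by (rule bounded_linear.linear)
  have inv\<beta>: "a + scaleR s (T' (\<beta> y)) = y" for y
  proof -
    have TL: "T' (L v) = scaleR (1/s) v" for v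
      unfolding L_def by (simp only: linear_scale[OF lin] inv)
    have "T' (\<beta> y) = scaleR (1/s) y - scaleR (1/s) a"
      unfolding \<beta>_def by (simp only: linear_diff[OF lin] TL)
    then show ?thesis using s by (simp add: scaleR_diff_right)
  qed
  have der: "(\<beta> has_derivative L) (at y)" for y
  proof -
    have "(L has_derivative L) (at y)"
      using L by (simp add: bounded_clinear_def bounded_linear_imp_has_derivative)
    then have "((\<lambda>y. L y - L a) has_derivative (\<lambda>v. L v - 0)) (at y)"
      by (intro has_derivative_diff has_derivative_const)
    then show ?thesis by (simp add: \<beta>_def)
  qed
  have \<beta>a: "\<beta> a = 0" by (simp add: \<beta>_def)
  show ?thesis by (rule that[OF s maps inv\<beta> \<beta>a L der])
qed

text \<open>If every \<open>f \<in> A(B_X)\<close> is holomorphic, then so is every \<open>g \<in> A(B_Y)\<close>: near \<open>a \<in> B_Y\<close>, \<open>g\<close>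
  factors as \<open>f \<circ> \<beta>\<close> through the chart of \<open>ball_chart\<close> with \<open>f = g \<circ> (a + s T') \<in> A(B_X)\<close>.\<close>

lemma in_A_holomorphic_transfer:
  fixes g :: "'y::complex_normed_vector \<Rightarrow> complex" and T :: "'y \<Rightarrow> 'x::complex_normed_vector"
  assumes A_Au: "\<And>f :: 'x \<Rightarrow> complex. in_A f \<Longrightarrow> in_Au f"
    and T: "bounded_clinear T" and T': "bounded_clinear T'" and inv: "\<And>y. T' (T y) = y"
    and g: "in_A g"
  shows "holomorphic_on_space g (ball 0 1)"
  unfolding holomorphic_on_space_def
proof
  have T'_bl: "bounded_linear T'" using T' by (simp add: bounded_clinear_def)
  fix a :: 'y assume "a \<in> ball 0 1"
  then have "norm a < 1" by simp
  obtain s \<beta> L where maps: "\<And>x. norm x < 1 \<Longrightarrow> norm (a + scaleR s (T' x)) < 1"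
    and inv\<beta>: "\<And>y. a + scaleR s (T' (\<beta> y)) = y" and \<beta>a: "\<beta> a = 0"
    and L: "bounded_clinear L" and der: "\<And>y. (\<beta> has_derivative L) (at y)"
    by (rule ball_chart[OF T T'_bl inv \<open>norm a < 1\<close>]) blast
  define f where "f = (\<lambda>x. g (a + scaleR s (T' x)))"
  have "in_A f" unfolding f_def
    by (rule in_A_comp_affine[OF g bounded_clinear_scaleR[OF T']]) (use maps in simp)
  then have "in_Au f" by (rule A_Au)
  then have "holomorphic_on_space f (ball 0 1)" unfolding in_Au_def by blast
  moreover have "(0::'x) \<in> ball 0 1" by simp
  ultimately obtain D where D: "(f has_derivative D) (at 0)" "\<And>c v. D (scaleC c v) = c * D v"
    unfolding holomorphic_on_space_def by blast
  have "((f \<circ> \<beta>) has_derivative (D \<circ> L)) (at a)"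
    by (rule diff_chain_at[OF der]) (simp add: \<beta>a D(1))
  moreover have "f \<circ> \<beta> = g" by (rule ext) (simp add: f_def inv\<beta>)
  ultimately have "(g has_derivative (D \<circ> L)) (at a)" by simp
  moreover have "\<forall>c v. (D \<circ> L) (scaleC c v) = c * (D \<circ> L) v"
    using L by (simp add: bounded_clinear_def D(2))
  ultimately show "\<exists>D. (g has_derivative D) (at a) \<and> (\<forall>c v. D (scaleC c v) = c * D v)" by blast
qed

lemma in_A_imp_in_Au_transfer:
  fixes g :: "'y::complex_normed_vector \<Rightarrow> complex" and T :: "'y \<Rightarrow> 'x::complex_normed_vector"
  assumes A_Au: "\<And>f :: 'x \<Rightarrow> complex. in_A f \<Longrightarrow> in_Au f"
    and T: "bounded_clinear T" and T': "bounded_clinear T'" and inv: "\<And>y. T' (T y) = y"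
    and g: "in_A g"
  shows "in_Au g"
proof -
  have "holomorphic_on_space g (ball 0 1)" by (rule in_A_holomorphic_transfer[OF A_Au T T' inv g])
  then show ?thesis unfolding in_Au_def using in_A_bounded[OF g] in_A_uniformly_continuous[OF g] by simp
qed

text \<open>If \<open>X^* = 0\<close>, then the finite type polynomials on \<open>X\<close> are the constants, hence so is
  every element of \<open>A(B_X)\<close>.\<close>

lemma in_A_constant_if_trivial_dual:
  fixes f :: "'x::complex_normed_vector \<Rightarrow> complex"
  assumes dual: "\<forall>\<psi>\<in>(cdual :: ('x \<Rightarrow> complex) set). \<forall>x. \<psi> x = 0"
    and f: "in_A f" and x: "x \<in> ball 0 1"
  shows "f x = f 0"
proof (rule ccontr)
  assume "f x \<noteq> f 0"
  then have e: "cmod (f x - f 0) / 2 > 0" by simp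
  obtain p where p: "p \<in> ftpoly" "\<forall>y\<in>ball 0 1. cmod (f y - p y) < cmod (f x - f 0) / 2"
    using f e unfolding in_A_def by blast
  obtain k where k: "\<forall>x. p x = k" using ftpoly_constant_if_trivial_dual[OF dual p(1)] by blast
  have "f x - f 0 = (f x - p x) - (f 0 - p 0)" using k by simp
  then have "cmod (f x - f 0) \<le> cmod (f x - p x) + cmod (f 0 - p 0)"
    by (metis norm_triangle_ineq4)
  also have "\<dots> < cmod (f x - f 0)"
    using bspec[OF p(2) x] bspec[OF p(2), of 0] by simp
  finally show False by simp
qed

text \<open>Hence, if \<open>A_u(B_X) \<subseteq> A(B_X)\<close>, every \<open>g \<in> A_u(B_Y)\<close> is locally constant through the charts,
  so constant on the connected ball \<open>B_Y\<close>, and in particular in \<open>A(B_Y)\<close>.\<close>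

lemma in_Au_imp_in_A_trivial_dual:
  fixes g :: "'y::complex_normed_vector \<Rightarrow> complex" and T :: "'y \<Rightarrow> 'x::complex_normed_vector"
  assumes dual: "\<forall>\<psi>\<in>(cdual :: ('x \<Rightarrow> complex) set). \<forall>x. \<psi> x = 0"
    and Au_A: "\<And>f :: 'x \<Rightarrow> complex. in_Au f \<Longrightarrow> in_A f"
    and T: "bounded_clinear T" and T': "bounded_clinear T'" and inv: "\<And>y. T' (T y) = y"
    and g: "in_Au g"
  shows "in_A g"
proof -
  have T'_bl: "bounded_linear T'" using T' by (simp add: bounded_clinear_def)
  have "g constant_on ball 0 1"
  proof (rule locally_constant_imp_constant[OF connected_ball])
    fix a :: 'y assume a: "a \<in> ball 0 1"
    then have "norm a < 1" by simp
    obtain s \<beta> L where maps: "\<And>x. norm x < 1 \<Longrightarrow> norm (a + scaleR s (T' x)) < 1"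
      and inv\<beta>: "\<And>y. a + scaleR s (T' (\<beta> y)) = y" and \<beta>a: "\<beta> a = 0"
      and der: "\<And>y. (\<beta> has_derivative L) (at y)"
      by (rule ball_chart[OF T T'_bl inv \<open>norm a < 1\<close>]) blast
    define f where "f = (\<lambda>x. g (a + scaleR s (T' x)))"
    have "in_Au f" unfolding f_def
      by (rule in_Au_comp_affine[OF g bounded_clinear_scaleR[OF T']]) (use maps in simp)
    then have f: "in_A f" by (rule Au_A)
    define U where "U = ball 0 1 \<inter> \<beta> -` ball 0 1"
    have "open (\<beta> -` ball 0 1)"
      by (rule continuous_open_vimage[OF open_ball has_derivative_continuous[OF der]])
    then have "openin (top_of_set (ball 0 1)) U" unfolding U_def by (rule openin_open_Int)
    moreover have "a \<in> U" using a \<beta>a by (simp add: U_def)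
    moreover have "g y = g a" if "y \<in> U" for y
    proof -
      have "f (\<beta> y) = f 0" using that by (intro in_A_constant_if_trivial_dual[OF dual f]) (simp add: U_def)
      then show ?thesis using bounded_clinear_zero[OF T'] by (simp add: f_def inv\<beta>)
    qed
    ultimately show "\<exists>U. openin (top_of_set (ball 0 1)) U \<and> a \<in> U \<and> (\<forall>y\<in>U. g y = g a)" by blast
  qed
  then obtain k where k: "\<forall>y\<in>ball 0 1. g y = k" unfolding constant_on_def by blast
  show "in_A g" unfolding in_A_def
    by (intro allI impI bexI[where x = "\<lambda>x. k"] ftpoly.const) (use k in simp)
qed

subsection \<open>Complex lines through the ball are approximable by polynomials\<close>

lemma cdual_attains_fraction_of_norm:
  fixes \<psi> :: "'x::complex_normed_vector \<Rightarrow> complex"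
  assumes \<psi>: "\<psi> \<in> cdual" "\<psi> x0 \<noteq> 0" and \<theta>: "0 < \<theta>" "\<theta> < 1"
  obtains w where "norm w < 1" "\<psi> w = of_real (\<theta> * onorm \<psi>)"
proof -
  have bl: "bounded_linear \<psi>" and h: "\<And>c x. \<psi> (scaleC c x) = c * \<psi> x"
    using \<psi>(1) by (auto simp: cdual_def)
  define K where "K = onorm \<psi>"
  have K: "K > 0" unfolding K_def using onorm_pos_lt[OF bl] \<psi>(2) by blast
  obtain x' where x': "\<theta> * K * norm x' < cmod (\<psi> x')"
  proof (rule ccontr)
    assume "\<not> thesis"
    then have "cmod (\<psi> x) \<le> \<theta> * K * norm x" for x
      using that[of x] by (meson not_less)
    then have "onorm \<psi> \<le> \<theta> * K" using \<theta> K by (intro onorm_bound) auto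
    then show False using \<theta> K by (simp add: K_def)
  qed
  have "0 \<le> \<theta> * K * norm x'" using \<theta> K by simp
  then have \<psi>x': "\<psi> x' \<noteq> 0" using x' by auto
  define w where "w = scaleC (of_real (\<theta> * K) / \<psi> x') x'"
  have "norm w = \<theta> * K * norm x' / cmod (\<psi> x')"
    using \<theta> K by (simp add: w_def norm_scaleC norm_divide norm_mult)
  also have "\<dots> < 1" using x' \<psi>x' by (simp add: divide_less_eq)
  finally show ?thesis by (rule that) (use \<psi>x' in \<open>simp add: w_def h K_def\<close>)
qed

text \<open>Indeed, with
  \<open>\<psi>(w) = \<parallel>\<psi>\<parallel> \<parallel>z\<parallel>\<close>, the function \<open>x \<mapsto> g((\<psi>(x)/\<psi>(w)) z)\<close> lies in \<open>A_u(B_X) = A(B_X)\<close>, and finite type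
  polynomials restricted to the line \<open>u \<mapsto> u w\<close> are polynomials.\<close>

lemma slice_poly_approximable:
  fixes g :: "'y::complex_normed_vector \<Rightarrow> complex" and \<psi> :: "'x::complex_normed_vector \<Rightarrow> complex"
  assumes Au_A: "\<And>f :: 'x \<Rightarrow> complex. in_Au f \<Longrightarrow> in_A f"
    and \<psi>: "\<psi> \<in> cdual" "\<psi> x0 \<noteq> 0" and g: "in_Au g" and z: "norm z < 1"
  shows "poly_approximable (\<lambda>u. g (scaleC u z))"
proof (cases "z = 0")
  case True
  then show ?thesis unfolding poly_approximable_def by (intro allI impI exI[of _ "[:g 0:]"]) simp
next
  case False
  then have \<theta>: "0 < norm z" "norm z < 1" using z by auto
  have bl: "bounded_linear \<psi>" and h: "\<And>c x. \<psi> (scaleC c x) = c * \<psi> x"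
    using \<psi>(1) by (auto simp: cdual_def)
  have K: "onorm \<psi> > 0" using onorm_pos_lt[OF bl] \<psi>(2) by blast
  obtain w where w: "norm w < 1" "\<psi> w = of_real (norm z * onorm \<psi>)"
    by (rule cdual_attains_fraction_of_norm[OF \<psi> \<theta>])
  define f where "f x = g (0 + scaleC (1 / \<psi> w * \<psi> x) z)" for x
  have "in_Au f" unfolding f_def
  proof (rule in_Au_comp_affine[OF g bounded_clinear_rank_one[OF \<psi>(1)]])
    fix x :: 'x assume "x \<in> ball 0 1"
    have "norm (scaleC (1 / \<psi> w * \<psi> x) z) = cmod (\<psi> x) / onorm \<psi>"
      using \<theta> K by (simp add: w(2) norm_scaleC norm_mult norm_divide)
    also have "\<dots> \<le> norm x" using onorm[OF bl, of x] K by (simp add: divide_le_eq mult.commute)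
    finally show "0 + scaleC (1 / \<psi> w * \<psi> x) z \<in> ball 0 1" using \<open>x \<in> ball 0 1\<close> by simp
  qed
  then have f: "in_A f" by (rule Au_A)
  have fw: "f (scaleC u w) = g (scaleC u z)" for u
    using \<theta> K by (simp add: f_def h w(2))
  show ?thesis unfolding poly_approximable_def
  proof (intro allI impI)
    fix e :: real assume "e > 0"
    then obtain p where p: "p \<in> ftpoly" "\<forall>x\<in>ball 0 1. cmod (f x - p x) < e"
      using f unfolding in_A_def by blast
    obtain q where q: "\<forall>u. p (scaleC u w) = poly q u" using ftpoly_on_line[OF p(1)] by blast
    have "cmod (g (scaleC u z) - poly q u) \<le> e" if "cmod u \<le> 1" for u
    proof -
      have "norm (scaleC u w) = cmod u * norm w" by (rule norm_scaleC)
      also have "\<dots> \<le> 1 * norm w" using that by (intro mult_right_mono) auto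
      finally have "scaleC u w \<in> ball 0 1" using w(1) by simp
      then have "cmod (f (scaleC u w) - p (scaleC u w)) < e" using p(2) by blast
      then show ?thesis using q fw[of u] by simp
    qed
    then show "\<exists>q. \<forall>u. cmod u \<le> 1 \<longrightarrow> cmod (g (scaleC u z) - poly q u) \<le> e" by blast
  qed
qed

subsection \<open>Homogeneous Taylor terms\<close>

text \<open>The \<open>n\<close>-th homogeneous term of the Taylor expansion of \<open>g\<close> at \<open>0\<close>, evaluated at \<open>z\<close>: the \<open>n\<close>-th
  Taylor coefficient of the slice \<open>u \<mapsto> g(u z)\<close>.\<close>

definition slice_coeff :: "('a::complex_normed_vector \<Rightarrow> complex) \<Rightarrow> nat \<Rightarrow> 'a \<Rightarrow> complex" where
  "slice_coeff g n z = taylor_coeff (\<lambda>u. g (scaleC u z)) n"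

lemma slice_coeff_homogeneous:
  assumes "poly_approximable (\<lambda>u. g (scaleC u z))" "cmod c \<le> 1"
  shows "slice_coeff g n (scaleC c z) = c ^ n * slice_coeff g n z"
proof -
  have "(\<lambda>u. g (scaleC u (scaleC c z))) = (\<lambda>u. g (scaleC (c * u) z))"
    by (simp add: scaleC_scaleC mult.commute)
  then show ?thesis
    unfolding slice_coeff_def using taylor_coeff_dilate(2)[OF assms, of n] by simp
qed

lemma in_Au_slices_bounded:
  assumes g: "in_Au g"
  obtains M where "\<And>u z. norm z < 1 \<Longrightarrow> cmod u \<le> 1 \<Longrightarrow> cmod (g (scaleC u z)) \<le> M"
proof -
  obtain M where M: "\<forall>y\<in>ball 0 1. cmod (g y) \<le> M" using g unfolding in_Au_def bounded_iff by auto
  have "cmod (g (scaleC u z)) \<le> M" if "norm z < 1" "cmod u \<le> 1" for u z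
  proof -
    have "norm (scaleC u z) \<le> 1 * norm z" unfolding norm_scaleC using that by (intro mult_right_mono) auto
    then show ?thesis using M that(1) by simp
  qed
  then show ?thesis by (rule that)
qed

lemma geometric_eventually_less:
  fixes t C e :: real
  assumes "0 \<le> t" "t < 1" "e > 0"
  obtains N0 where "\<And>N. N \<ge> N0 \<Longrightarrow> C * t ^ N < e"
proof -
  have "(\<lambda>N. C * t ^ N) \<longlonglongrightarrow> 0"
    using assms by (intro tendsto_mult_right_zero LIMSEQ_power_zero) auto
  then have "eventually (\<lambda>N. C * t ^ N < e) sequentially" using assms(3) by (rule order_tendstoD(2))
  then show ?thesis using that unfolding eventually_sequentially by blast
qed

text \<open>If \<open>A_u(B_X) \<subseteq> A(B_X)\<close>, then each homogeneous Taylor term of \<open>g \<in> A_u(B_Y)\<close>, pulled back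
  along a bounded complex-linear \<open>S : X \<rightarrow> Y\<close> with \<open>S(B_X) \<subseteq> B_Y\<close>, lies in \<open>A(B_X)\<close>: it is the
  uniform limit of the discrete Fourier coefficients of \<open>u \<mapsto> g(u S(x)/2)\<close>, and these are finite
  sums of compositions of \<open>g\<close> with linear maps, hence in \<open>A_u(B_X)\<close>.\<close>

lemma slice_coeff_comp_in_A:
  fixes g :: "'y::complex_normed_vector \<Rightarrow> complex" and S :: "'x::complex_normed_vector \<Rightarrow> 'y"
  assumes Au_A: "\<And>f :: 'x \<Rightarrow> complex. in_Au f \<Longrightarrow> in_A f" and g: "in_Au g"
    and slices: "\<And>z. norm z < 1 \<Longrightarrow> poly_approximable (\<lambda>u. g (scaleC u z))"
    and S: "bounded_clinear S" and maps: "\<And>x. norm x < 1 \<Longrightarrow> norm (S x) < 1"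
  shows "in_A (\<lambda>x. slice_coeff g n (S x))"
proof (rule in_A_uniform_limit)
  fix e :: real assume e: "e > 0"
  obtain M where bd: "\<And>u z. norm z < 1 \<Longrightarrow> cmod u \<le> 1 \<Longrightarrow> cmod (g (scaleC u z)) \<le> M"
    using in_Au_slices_bounded[OF g] by blast
  obtain N0 where N0: "\<And>N. N \<ge> N0 \<Longrightarrow> (2 ^ n * M * 2) * (1/2) ^ N < e"
    by (rule geometric_eventually_less[of "1/2" e]) (use e in auto)
  define N where "N = max N0 (Suc n)"
  have nN: "n < N" by (simp add: N_def)
  define h where "h x = of_real (2 ^ n) * dft n N (\<lambda>u. g (scaleC (of_real (1/2) * u) (S x)))" for x
  have slice: "in_Au (\<lambda>x. g (scaleC (of_real (1/2) * unit_root N ^ j) (S x)))" for j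
  proof -
    have "in_Au (\<lambda>x. g (0 + scaleC (of_real (1/2) * unit_root N ^ j) (S x)))"
    proof (rule in_Au_comp_affine[OF g bounded_clinear_scaleC[OF S]])
      fix x :: 'x assume "x \<in> ball 0 1"
      then show "0 + scaleC (of_real (1/2) * unit_root N ^ j) (S x) \<in> ball 0 1"
        using maps[of x] by (simp add: norm_scaleC norm_mult)
    qed
    then show ?thesis by simp
  qed
  have "in_Au h" unfolding h_def dft_def divide_inverse_commute[where b = "of_nat N"]
    by (intro in_Au_cmult in_Au_sum slice)
  then have "in_A h" by (rule Au_A)
  moreover have "cmod (slice_coeff g n (S x) - h x) \<le> e" if "x \<in> ball 0 1" for x
  proof -
    have z: "norm (S x) < 1" using maps that by simp
    have half: "complex_of_real (2 ^ n) * complex_of_real (1/2) ^ n = 1"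
      using power_mult_distrib[of "2::complex" "1/2" n] by simp
    have "slice_coeff g n (S x) - h x = of_real (2 ^ n) *
        (of_real (1/2) ^ n * slice_coeff g n (S x) - dft n N (\<lambda>u. g (scaleC (of_real (1/2) * u) (S x))))"
      unfolding h_def right_diff_distrib mult.assoc[symmetric] half by simp
    then have "cmod (slice_coeff g n (S x) - h x) = 2 ^ n *
        cmod (dft n N (\<lambda>u. g (scaleC (of_real (1/2) * u) (S x))) - of_real (1/2) ^ n * slice_coeff g n (S x))"
      by (simp add: norm_mult norm_power norm_minus_commute)
    also have "\<dots> \<le> 2 ^ n * (M * ((1/2) ^ N / (1 - 1/2)))"
      using dft_dilated_estimate[OF slices[OF z] bd[OF z], of "1/2" n N] nN
      by (intro mult_left_mono) (auto simp: slice_coeff_def)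
    also have "\<dots> = (2 ^ n * M * 2) * (1/2) ^ N" by simp
    also have "\<dots> < e" using N0 by (simp add: N_def)
    finally show ?thesis by simp
  qed
  ultimately show "\<exists>h. in_A h \<and> (\<forall>x\<in>ball 0 1. cmod (slice_coeff g n (S x) - h x) \<le> e)" by blast
qed

lemma bounded_linear_large_bound:
  assumes "bounded_linear T" "c > 0"
  obtains b where "b > 0" "\<And>y. norm (T y) \<le> norm y * b" "b * c \<ge> 1"
proof -
  obtain b0 where b0: "b0 > 0" "\<And>y. norm (T y) \<le> norm y * b0"
    using bounded_linear.pos_bounded[OF assms(1)] by blast
  define b where "b = max b0 (1/c)"
  show ?thesis
  proof (rule that)
    show "b > 0" using b0 by (simp add: b_def)
    show "norm (T y) \<le> norm y * b" for y
      using b0(2)[of y] by (rule order_trans) (simp add: b_def mult_left_mono)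
    have "1/c \<le> b" by (simp add: b_def)
    then show "b * c \<ge> 1" using assms(2) by (simp add: field_simps)
  qed
qed

text \<open>Indeed \<open>a(y) = (bc)^n a(T'(T y/b)/c)\<close>,
  and \<open>T/b\<close> maps \<open>B_Y\<close> into \<open>B_X\<close>; homogeneity absorbs the mismatch between the balls.\<close>

lemma homogeneous_in_A_transfer:
  fixes a :: "'y::complex_normed_vector \<Rightarrow> complex" and T :: "'y \<Rightarrow> 'x::complex_normed_vector"
  assumes hom: "\<And>s y. 0 < s \<Longrightarrow> s \<le> 1 \<Longrightarrow> norm y < 1 \<Longrightarrow> a (scaleR s y) = of_real s ^ n * a y"
    and T: "bounded_clinear T" and T': "bounded_linear T'" and inv: "\<And>y. T' (T y) = y"
    and c: "c > 0" "\<And>x. norm (T' x) \<le> norm x * c"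
    and A: "in_A (\<lambda>x. a (scaleR (1/c) (T' x)))"
  shows "in_A a"
proof -
  obtain b where b: "b > 0" "\<And>y. norm (T y) \<le> norm y * b" and bc: "b * c \<ge> 1"
    using bounded_linear_large_bound[of T c] T c(1) by (auto simp: bounded_clinear_def)
  define U where "U y = scaleR (1/b) (T y)" for y
  have U: "bounded_clinear U" unfolding U_def by (rule bounded_clinear_scaleR[OF T])
  have U_ball: "norm (U y) < 1" if "norm y < 1" for y
  proof -
    have "norm (U y) \<le> norm y" using b(2)[of y] b(1) by (simp add: U_def divide_le_eq mult.commute)
    then show ?thesis using that by simp
  qed
  have pullback: "a y = of_real ((b * c) ^ n) * a (scaleR (1/c) (T' (U y)))" if "norm y < 1" for y
  proof -
    have "scaleR (1/c) (T' (U y)) = scaleR (1 / (b * c)) y"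
      by (simp add: U_def linear_scale[OF bounded_linear.linear[OF T']] inv)
    then have "a (scaleR (1/c) (T' (U y))) = of_real (1 / (b * c)) ^ n * a y"
      using hom[OF _ _ that, of "1 / (b * c)"] b(1) c(1) bc by simp
    moreover have "complex_of_real ((b * c) ^ n) * of_real (1 / (b * c)) ^ n = 1"
    proof -
      have "(b * c) ^ n * (1 / (b * c)) ^ n = 1"
        using power_mult_distrib[of "b * c" "1 / (b * c)" n] b(1) c(1) by simp
      then show ?thesis by (metis of_real_1 of_real_mult of_real_power)
    qed
    ultimately show ?thesis by (simp add: mult.assoc[symmetric])
  qed
  show ?thesis unfolding in_A_def
  proof (intro allI impI)
    fix e :: real assume e: "e > 0"
    have bcn: "(b * c) ^ n > 0" using b(1) c(1) by simp
    obtain p where p: "p \<in> ftpoly" "\<forall>x\<in>ball 0 1. cmod (a (scaleR (1/c) (T' x)) - p x) < e / (b * c) ^ n"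
      using A e bcn unfolding in_A_def by (meson divide_pos_pos)
    have "(\<lambda>y. of_real ((b * c) ^ n) * p (0 + U y)) \<in> ftpoly"
      by (intro ftpoly_cmult ftpoly_comp_affine[OF p(1) U])
    moreover have "cmod (a y - of_real ((b * c) ^ n) * p (0 + U y)) < e" if "y \<in> ball 0 1" for y
    proof -
      have "cmod (a y - of_real ((b * c) ^ n) * p (0 + U y))
          = (b * c) ^ n * cmod (a (scaleR (1/c) (T' (U y))) - p (U y))"
        using pullback[of y] that b(1) c(1) by (simp add: right_diff_distrib[symmetric] norm_mult norm_power)
      also have "\<dots> < (b * c) ^ n * (e / (b * c) ^ n)"
        using p(2) U_ball[of y] that bcn by (intro mult_strict_left_mono) auto
      finally show ?thesis using b(1) c(1) by simp
    qed
    ultimately show "\<exists>p\<in>ftpoly. \<forall>y\<in>ball 0 1. cmod (a y - p y) < e"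
      by (intro bexI[where x = "\<lambda>y. of_real ((b * c) ^ n) * p (0 + U y)"]) auto
  qed
qed

text \<open>A function in \<open>A_u(B_Y)\<close> whose slices are polynomially approximable and whose homogeneous
  Taylor terms lie in \<open>A(B_Y)\<close> itself lies in \<open>A(B_Y)\<close>: by uniform continuity \<open>g\<close> is uniformly close
  to its dilation \<open>g(r \<cdot>)\<close>, which is uniformly close to a truncated Taylor series.\<close>

lemma in_A_by_taylor_expansion:
  fixes g :: "'y::complex_normed_vector \<Rightarrow> complex"
  assumes g: "in_Au g" and slices: "\<And>z. norm z < 1 \<Longrightarrow> poly_approximable (\<lambda>u. g (scaleC u z))"
    and coeffs: "\<And>n. in_A (slice_coeff g n)"
  shows "in_A g"
proof (rule in_A_uniform_limit)
  fix e :: real assume e: "e > 0"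
  obtain M where bd: "\<And>u z. norm z < 1 \<Longrightarrow> cmod u \<le> 1 \<Longrightarrow> cmod (g (scaleC u z)) \<le> M"
    using in_Au_slices_bounded[OF g] by blast
  obtain d where d: "d > 0" "\<forall>x\<in>ball 0 1. \<forall>x'\<in>ball 0 1. dist x' x < d \<longrightarrow> dist (g x') (g x) < e/2"
    using g e unfolding in_Au_def uniformly_continuous_on_def by (meson half_gt_zero)
  define r where "r = max (1/2) (1 - d/2)"
  have r: "0 \<le> r" "r < 1" "1 - r < d" using d by (auto simp: r_def)
  obtain N0 where N0: "M / (1 - r) * r ^ N0 < e/2"
    using geometric_eventually_less[OF r(1,2), of "e/2" "M / (1 - r)"] e by auto
  define h where "h y = (\<Sum>n<N0. of_real r ^ n * slice_coeff g n y)" for y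
  have "in_A h" unfolding h_def by (intro in_A_sum in_A_cmult coeffs)
  moreover have "cmod (g y - h y) \<le> e" if y: "y \<in> ball 0 1" for y
  proof -
    have ny: "norm y < 1" using y by simp
    have "norm (scaleR r y) \<le> 1 * norm y" unfolding norm_scaleR using r by (intro mult_right_mono) auto
    then have ry: "scaleR r y \<in> ball 0 1" using ny by simp
    have "y - scaleR r y = scaleR (1 - r) y" by (simp add: scaleR_diff_left)
    then have "dist y (scaleR r y) = (1 - r) * norm y" using r by (simp add: dist_norm)
    also have "\<dots> \<le> 1 - r" using r ny by (intro mult_left_le) auto
    also have "\<dots> < d" by (rule r(3))
    finally have 1: "cmod (g y - g (scaleC (of_real r) y)) < e/2"
      using d(2) y ry by (simp add: dist_norm scaleR_scaleC)
    have "cmod (g (scaleC (of_real r) y) - h y) \<le> M * (r ^ N0 / (1 - r))"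
      using taylor_remainder_estimate[OF slices[OF ny] bd[OF ny] r(1,2), of N0]
      by (simp add: h_def slice_coeff_def mult.commute)
    also have "\<dots> < e/2" using N0 by simp
    finally show ?thesis
      using 1 norm_triangle_ineq[of "g y - g (scaleC (of_real r) y)" "g (scaleC (of_real r) y) - h y"]
      by simp
  qed
  ultimately show "\<exists>h. in_A h \<and> (\<forall>y\<in>ball 0 1. cmod (g y - h y) \<le> e)" by blast
qed

text \<open>If \<open>A_u(B_X) \<subseteq> A(B_X)\<close>, then \<open>A_u(B_Y) \<subseteq> A(B_Y)\<close>: the trivial-dual case is handled by
  constancy; otherwise all slices are polynomially approximable, every homogeneous Taylor term
  lies in \<open>A(B_Y)\<close> by transfer through \<open>T^{-1}/c\<close>, and the Taylor expansion concludes.\<close>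

lemma in_Au_imp_in_A_transfer:
  fixes g :: "'y::complex_normed_vector \<Rightarrow> complex" and T :: "'y \<Rightarrow> 'x::complex_normed_vector"
  assumes Au_A: "\<And>f :: 'x \<Rightarrow> complex. in_Au f \<Longrightarrow> in_A f"
    and T: "bounded_clinear T" and T': "bounded_clinear T'" and inv: "\<And>y. T' (T y) = y"
    and g: "in_Au g"
  shows "in_A g"
proof (cases "\<exists>\<psi>\<in>(cdual :: ('x \<Rightarrow> complex) set). \<exists>x. \<psi> x \<noteq> 0")
  case False
  then show ?thesis using in_Au_imp_in_A_trivial_dual[OF _ Au_A T T' inv g] by blast
next
  case True
  then obtain \<psi> :: "'x \<Rightarrow> complex" and x0 where \<psi>: "\<psi> \<in> cdual" "\<psi> x0 \<noteq> 0" by blast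
  have slices: "poly_approximable (\<lambda>u. g (scaleC u z))" if "norm z < 1" for z
    by (rule slice_poly_approximable[OF Au_A \<psi> g that])
  have T'_bl: "bounded_linear T'" using T' by (simp add: bounded_clinear_def)
  obtain c where c: "c > 0" "\<And>x. norm (T' x) \<le> norm x * c"
    using bounded_linear.pos_bounded[OF T'_bl] by blast
  have S_ball: "norm (scaleR (1/c) (T' x)) < 1" if "norm x < 1" for x
  proof -
    have "norm (T' x) \<le> norm x * c" by (rule c(2))
    also have "\<dots> < 1 * c" using that c(1) by (intro mult_strict_right_mono)
    finally show ?thesis using c(1) by simp
  qed
  have coeffs: "in_A (slice_coeff g n)" for n
  proof (rule homogeneous_in_A_transfer[OF _ T T'_bl inv c])
    show "slice_coeff g n (scaleR s y) = of_real s ^ n * slice_coeff g n y"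
      if "0 < s" "s \<le> 1" "norm y < 1" for s y
      using slice_coeff_homogeneous[OF slices[OF that(3)], of "of_real s"] that
      by (simp add: scaleR_scaleC)
    show "in_A (\<lambda>x. slice_coeff g n (scaleR (1/c) (T' x)))"
      by (rule slice_coeff_comp_in_A[OF Au_A g slices bounded_clinear_scaleR[OF T'] S_ball])
  qed
  show ?thesis by (rule in_A_by_taylor_expansion[OF g slices coeffs])
qed

theorem lemma2p9:
  fixes T :: "'y::complex_banach \<Rightarrow> 'x::complex_banach"
  assumes hX: "\<forall>f :: 'x \<Rightarrow> complex. in_Au f \<longleftrightarrow> in_A f"
    and hT: "bounded_linear T" "clinear T" "bij T"
    and hTinv: "bounded_linear (inv T)"
  shows "\<forall>g :: 'y \<Rightarrow> complex. in_Au g \<longleftrightarrow> in_A g"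
proof -
  have left_inv: "\<And>y. inv T (T y) = y" using hT(3) by (simp add: bij_is_inj)
  have right_inv: "\<And>x. T (inv T x) = x" using hT(3) by (simp add: bij_is_surj surj_f_inv_f)
  have T: "bounded_clinear T" using hT(1,2) by (simp add: bounded_clinear_def clinear_def)
  have T': "bounded_clinear (inv T)" by (rule bounded_clinear_inverse[OF T hTinv left_inv right_inv])
  have A_Au: "\<And>f :: 'x \<Rightarrow> complex. in_A f \<Longrightarrow> in_Au f"
    and Au_A: "\<And>f :: 'x \<Rightarrow> complex. in_Au f \<Longrightarrow> in_A f" using hX by blast+
  show ?thesis
    using in_A_imp_in_Au_transfer[OF A_Au T T' left_inv] in_Au_imp_in_A_transfer[OF Au_A T T' left_inv]
    by blast
qed

end
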